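(* For every integer $j$ with $1\le j\le k-2$, $$\partial_{\phi_{k-j-1}}f^{(j)}=U''_{k-j-1}(\phi_{k-j}-\phi_{k-j-1})\;Q\big(Q(\partial_{\phi_{k-j}}f^{(j-1)})\big)+\widehat{\mathcal O}^{\mathrm{fin}}(L^{-2j-1}).$$
   Context: Integers $n\ge2$, $2\le k\le n$. For $i=1,\dots,n-1$, $U_i:\mathbb T\to\mathbb R$ ($\mathbb T=\mathbb R/2\pi\mathbb Z$) real smooth with finitely many Fourier modes, no constant mode, and no $\phi$ with $U_i'(\phi)=U_i''(\phi)=0$. $\mathcal D_{L,r,\sigma}=\{(\mathbf I,\boldsymbol\phi)\in\mathbb C^{2n}:|I_i-L\delta_{i,k}|<rL,|\mathrm{Im}\,\phi_i|<\sigma\ \forall i\}$, $\|f\|_{L,r,\sigma}=\sup_{\mathcal D_{L,r,\sigma}}|f|$. A $\boldsymbol\phi$-periodic $f$ is admissible if there exist $L_0,r,\sigma>0$ with $f$ analytic on $\mathcal D_{L,r,\sigma}$ and $\|f\|_{L,r,\sigma}<\infty$ for all $L\ge L_0$; $f=\widehat{\mathcal O}(L^s)$ means $f$ admissible with $\|f\|_{L,r,\sigma}\le CL^s$ for all $L\ge L_0$, some $r,\sigma,L_0,C>0$; $f=\widehat{\mathcal O}^{\mathrm{fin}}(L^s)$ means in addition that its Fourier series $\sum_{\boldsymbol\mu}f_{\boldsymbol\mu}(\mathbf I)e^{\mathrm i\boldsymbol\mu\cdot\boldsymbol\phi}$ has finitely many modes. $\boldsymbol\mu$ is non-resonant iff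 $\mu_k\ne0$; $f^{\mathrm{NR}},f^{\mathrm R}$ are the non-resonant/resonant parts; $Qf=-\mathrm i\sum_{\mu_k\ne0}\frac{f_{\boldsymbol\mu}(\mathbf I)}{\mathbf I\cdot\boldsymbol\mu}e^{\mathrm i\boldsymbol\mu\cdot\boldsymbol\phi}$. $\{F,G\}=\sum_i(\partial_{\phi_i}F\partial_{I_i}G-\partial_{I_i}F\partial_{\phi_i}G)$, $\mathrm{ad}^0_\chi G=G$, $\mathrm{ad}^s_\chi G=\{\mathrm{ad}^{s-1}_\chi G,\chi\}$. $f^{(0)}=\sum_{i=1}^{n-1}U_i(\phi_{i+1}-\phi_i)$; for $j\ge1$, $\chi^{(j-1)}=Qf^{(j-1)}$, $f^{(j)}=\sum_{\ell=1}^{k-1}\frac1{\ell!}\mathrm{ad}^\ell_{\chi^{(j-1)}}\big(\sum_{m=0}^{j-2}f^{(m),\mathrm R}+f^{(j-1)}-\frac{f^{(j-1),\mathrm{NR}}}{\ell+1}\big)$. *)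

theory Defs
  imports "HOL-Analysis.Analysis"
begin

text \<open>
  Points of phase space: actions I and angles phi, both indexed by 1..n and
  represented as functions nat => complex (only coordinates 1..n matter).
  Integer wave vectors mu are functions nat => int (only coordinates 1..n matter).

  A function with finitely many Fourier modes in phi is represented by its
  Fourier data: c mu I is the Fourier coefficient f_mu(I) of the mode e^(i mu.phi).
\<close>

type_synonym fdata = "(nat \<Rightarrow> int) \<Rightarrow> (nat \<Rightarrow> complex) \<Rightarrow> complex"

definition fsupp :: "fdata \<Rightarrow> (nat \<Rightarrow> int) set" where
  "fsupp c = {\<mu>. c \<mu> \<noteq> (\<lambda>_. 0)}"

definition mu_dot_phi :: "nat \<Rightarrow> (nat \<Rightarrow> int) \<Rightarrow> (nat \<Rightarrow> complex) \<Rightarrow> complex" where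
  "mu_dot_phi n \<mu> \<phi> = (\<Sum>i=1..n. of_int (\<mu> i) * \<phi> i)"

definition feval :: "nat \<Rightarrow> fdata \<Rightarrow> (nat \<Rightarrow> complex) \<Rightarrow> (nat \<Rightarrow> complex) \<Rightarrow> complex" where
  "feval n c I \<phi> = (\<Sum>\<mu>\<in>fsupp c. c \<mu> I * exp (\<i> * mu_dot_phi n \<mu> \<phi>))"

definition fzero :: fdata where "fzero = (\<lambda>\<mu> I. 0)"
definition fadd :: "fdata \<Rightarrow> fdata \<Rightarrow> fdata" where "fadd c d = (\<lambda>\<mu> I. c \<mu> I + d \<mu> I)"
definition fsub :: "fdata \<Rightarrow> fdata \<Rightarrow> fdata" where "fsub c d = (\<lambda>\<mu> I. c \<mu> I - d \<mu> I)"
definition fscale :: "complex \<Rightarrow> fdata \<Rightarrow> fdata" where "fscale a c = (\<lambda>\<mu> I. a * c \<mu> I)"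

definition fmult :: "fdata \<Rightarrow> fdata \<Rightarrow> fdata" where
  "fmult c d = (\<lambda>\<mu> I. \<Sum>\<nu>\<in>fsupp c. c \<nu> I * d (\<mu> - \<nu>) I)"

definition dphi :: "nat \<Rightarrow> fdata \<Rightarrow> fdata" where
  "dphi i c = (\<lambda>\<mu> I. \<i> * of_int (\<mu> i) * c \<mu> I)"

definition dI :: "nat \<Rightarrow> fdata \<Rightarrow> fdata" where
  "dI i c = (\<lambda>\<mu> I. deriv (\<lambda>z. c \<mu> (I(i := z))) (I i))"

definition pbracket :: "nat \<Rightarrow> fdata \<Rightarrow> fdata \<Rightarrow> fdata" where
  "pbracket n F G = (\<lambda>\<mu> I. \<Sum>i=1..n.
      fsub (fmult (dphi i F) (dI i G)) (fmult (dI i F) (dphi i G)) \<mu> I)"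

primrec adpow :: "nat \<Rightarrow> fdata \<Rightarrow> nat \<Rightarrow> fdata \<Rightarrow> fdata" where
  "adpow n ch 0 G = G"
| "adpow n ch (Suc s) G = pbracket n (adpow n ch s G) ch"

definition resp :: "nat \<Rightarrow> fdata \<Rightarrow> fdata" where
  "resp k c = (\<lambda>\<mu> I. if \<mu> k = 0 then c \<mu> I else 0)"

definition nresp :: "nat \<Rightarrow> fdata \<Rightarrow> fdata" where
  "nresp k c = (\<lambda>\<mu> I. if \<mu> k \<noteq> 0 then c \<mu> I else 0)"

definition Qop :: "nat \<Rightarrow> nat \<Rightarrow> fdata \<Rightarrow> fdata" where
  "Qop n k c = (\<lambda>\<mu> I. if \<mu> k \<noteq> 0
      then - \<i> * c \<mu> I / (\<Sum>i=1..n. I i * of_int (\<mu> i)) else 0)"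

definition Upot :: "(nat \<Rightarrow> int \<Rightarrow> complex) \<Rightarrow> nat \<Rightarrow> complex \<Rightarrow> complex" where
  "Upot u i x = (\<Sum>m\<in>{m. u i m \<noteq> 0}. u i m * exp (\<i> * of_int m * x))"

definition Upot' :: "(nat \<Rightarrow> int \<Rightarrow> complex) \<Rightarrow> nat \<Rightarrow> complex \<Rightarrow> complex" where
  "Upot' u i x = (\<Sum>m\<in>{m. u i m \<noteq> 0}. \<i> * of_int m * u i m * exp (\<i> * of_int m * x))"

definition Upot'' :: "(nat \<Rightarrow> int \<Rightarrow> complex) \<Rightarrow> nat \<Rightarrow> complex \<Rightarrow> complex" where
  "Upot'' u i x = (\<Sum>m\<in>{m. u i m \<noteq> 0}. (\<i> * of_int m)^2 * u i m * exp (\<i> * of_int m * x))"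

text \<open>Fourier data of f^(0) = sum_{i=1}^{n-1} U_i(phi_{i+1} - phi_i).\<close>
definition f0data :: "nat \<Rightarrow> (nat \<Rightarrow> int \<Rightarrow> complex) \<Rightarrow> fdata" where
  "f0data n u = (\<lambda>\<mu> I. \<Sum>i=1..n-1. \<Sum>m\<in>{m. u i m \<noteq> 0}.
      if \<mu> = (\<lambda>l. if l = i + 1 then m else if l = i then - m else 0) then u i m else 0)"

fun fseq :: "nat \<Rightarrow> nat \<Rightarrow> (nat \<Rightarrow> int \<Rightarrow> complex) \<Rightarrow> nat \<Rightarrow> fdata" where
  "fseq n k u 0 = f0data n u"
| "fseq n k u (Suc j) =
     (\<lambda>\<mu> I. \<Sum>l=1..k-1. fscale (1 / of_nat (fact l))
        (adpow n (Qop n k (fseq n k u j)) l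
          (fadd (\<lambda>\<nu> J. \<Sum>m<j. resp k (fseq n k u m) \<nu> J)
                (fsub (fseq n k u j) (fscale (1 / of_nat (l + 1)) (nresp k (fseq n k u j)))))) \<mu> I)"

definition Dom :: "nat \<Rightarrow> nat \<Rightarrow> real \<Rightarrow> real \<Rightarrow> real \<Rightarrow> ((nat \<Rightarrow> complex) \<times> (nat \<Rightarrow> complex)) set" where
  "Dom n k L r \<sigma> = {(I, \<phi>). \<forall>i\<in>{1..n}.
      cmod (I i - (if i = k then of_real L else 0)) < r * L \<and> \<bar>Im (\<phi> i)\<bar> < \<sigma>}"

text \<open>Holomorphy in the 2n complex variables (I_1..I_n, phi_1..phi_n) on a set:
  continuity plus holomorphy in each variable separately (equivalent to joint
  holomorphy on open sets by Osgood's lemma).\<close>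
definition holo_on :: "nat \<Rightarrow> ((nat \<Rightarrow> complex) \<Rightarrow> (nat \<Rightarrow> complex) \<Rightarrow> complex)
    \<Rightarrow> ((nat \<Rightarrow> complex) \<times> (nat \<Rightarrow> complex)) set \<Rightarrow> bool" where
  "holo_on n F D \<longleftrightarrow>
     (\<forall>(I, \<phi>)\<in>D. \<forall>\<epsilon>>0. \<exists>\<delta>>0. \<forall>I' \<phi>'.
        (\<forall>i\<in>{1..n}. cmod (I' i - I i) < \<delta> \<and> cmod (\<phi>' i - \<phi> i) < \<delta>) \<and>
        (\<forall>i. i \<notin> {1..n} \<longrightarrow> I' i = I i \<and> \<phi>' i = \<phi> i)
        \<longrightarrow> cmod (F I' \<phi>' - F I \<phi>) < \<epsilon>) \<and>
     (\<forall>(I, \<phi>)\<in>D. \<forall>i\<in>{1..n}.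
        (\<lambda>z. F (I(i := z)) \<phi>) field_differentiable (at (I i)) \<and>
        (\<lambda>z. F I (\<phi>(i := z))) field_differentiable (at (\<phi> i)))"

definition bigO_fin :: "nat \<Rightarrow> nat \<Rightarrow> ((nat \<Rightarrow> complex) \<Rightarrow> (nat \<Rightarrow> complex) \<Rightarrow> complex) \<Rightarrow> real \<Rightarrow> bool" where
  "bigO_fin n k F s \<longleftrightarrow>
     (\<exists>r \<sigma> L0 C. r > 0 \<and> \<sigma> > 0 \<and> L0 > 0 \<and> C > 0 \<and>
        (\<forall>L\<ge>L0. holo_on n F (Dom n k L r \<sigma>) \<and>
                 (\<forall>(I, \<phi>)\<in>Dom n k L r \<sigma>. cmod (F I \<phi>) \<le> C * L powr s)) \<and>
        (\<exists>M g. finite M \<and> (\<forall>L\<ge>L0. \<forall>(I, \<phi>)\<in>Dom n k L r \<sigma>.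
             F I \<phi> = (\<Sum>\<mu>\<in>M. g \<mu> I * exp (\<i> * mu_dot_phi n \<mu> \<phi>)))))"

end

theory Submission
  imports Defs
begin

text \<open>
  Along the recursion, \<open>f\<^sup>(\<^sup>m\<^sup>)\<close> keeps three structural properties: it is \<open>O(L\<^sup>-\<^sup>2\<^sup>m)\<close>, since every
  bracket with \<open>\<chi> = Q f\<close> brings one more factor \<open>1/(I\<cdot>\<mu>) \<sim> 1/L\<close> and one more action derivative;
  for \<open>m \<ge> 1\<close> it has no Fourier modes involving \<open>\<phi>\<^sub>1, \<dots>, \<phi>\<^sub>k\<^sub>-\<^sub>m\<^sub>-\<^sub>2\<close>; and it does not depend on
  \<open>I\<^sub>1, \<dots>, I\<^sub>k\<^sub>-\<^sub>m\<^sub>-\<^sub>1\<close>. Consequently, for \<open>a = k - j - 1\<close>, \<open>\<partial>\<^sub>\<phi>\<^sub>a\<close> commutes with \<open>ad\<^sub>\<chi>\<close> and maps the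
  argument of every \<open>ad\<^sub>\<chi>\<close> to \<open>\<partial>\<^sub>\<phi>\<^sub>a f\<^sup>(\<^sup>0\<^sup>)\<close>, whose modes couple neighbouring angles only. All brackets
  with \<open>l \<ge> 2\<close> are \<open>O(L\<^sup>-\<^sup>2\<^sup>j\<^sup>-\<^sup>1)\<close>, and in \<open>{\<partial>\<^sub>\<phi>\<^sub>a f\<^sup>(\<^sup>0\<^sup>), \<chi>}\<close> only the term
  \<open>\<partial>\<^sub>\<phi>\<^sub>a\<^sub>+\<^sub>1\<partial>\<^sub>\<phi>\<^sub>a f\<^sup>(\<^sup>0\<^sup>) \<partial>\<^sub>I\<^sub>a\<^sub>+\<^sub>1 \<chi> = (-U\<^sub>a'') (-Q(Q(\<partial>\<^sub>\<phi>\<^sub>a\<^sub>+\<^sub>1 f\<^sup>(\<^sup>j\<^sup>-\<^sup>1\<^sup>))))\<close> survives.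

  Functions are handled through their Fourier data. The coefficients are polynomials in the
  inverses \<open>1/(I\<cdot>\<nu>)\<close> of the small denominators met so far; on a domain whose radius keeps every
  \<open>I\<cdot>\<nu>\<close> away from \<open>0\<close> such finite Fourier sums are holomorphic and obey the required bounds.
\<close>

section \<open>Rational functions of the actions\<close>

definition act_dot :: "nat \<Rightarrow> (nat \<Rightarrow> complex) \<Rightarrow> (nat \<Rightarrow> int) \<Rightarrow> complex" where
  "act_dot n I \<nu> = (\<Sum>i=1..n. I i * of_int (\<nu> i))"

definition regular :: "nat \<Rightarrow> (nat \<Rightarrow> int) set \<Rightarrow> (nat \<Rightarrow> complex) set" where
  "regular n N = {I. \<forall>\<nu>\<in>N. act_dot n I \<nu> \<noteq> 0}"

text \<open>\<open>rat_decay n N d f\<close>: \<open>f\<close> is a polynomial in the inverses \<open>1/(I\<cdot>\<nu>)\<close>, \<open>\<nu> \<in> N\<close>, all of whose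
  monomials have degree at least \<open>d\<close>; since \<open>I\<cdot>\<nu> \<sim> L \<nu>\<^sub>k\<close> on the domain, such an \<open>f\<close> is \<open>O(L\<^sup>-\<^sup>d)\<close>.\<close>
inductive rat_decay :: "nat \<Rightarrow> (nat \<Rightarrow> int) set \<Rightarrow> nat \<Rightarrow> ((nat \<Rightarrow> complex) \<Rightarrow> complex) \<Rightarrow> bool"
  for n N where
  const: "rat_decay n N 0 (\<lambda>I. c)"
| zero: "rat_decay n N d (\<lambda>I. 0)"
| inverse: "\<nu> \<in> N \<Longrightarrow> rat_decay n N 1 (\<lambda>I. inverse (act_dot n I \<nu>))"
| add: "rat_decay n N d f \<Longrightarrow> rat_decay n N d g \<Longrightarrow> rat_decay n N d (\<lambda>I. f I + g I)"
| mult: "rat_decay n N d f \<Longrightarrow> rat_decay n N e g \<Longrightarrow> rat_decay n N (d + e) (\<lambda>I. f I * g I)"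
| weaken: "rat_decay n N d f \<Longrightarrow> e \<le> d \<Longrightarrow> rat_decay n N e f"

lemma rat_decay_cmult: "rat_decay n N d f \<Longrightarrow> rat_decay n N d (\<lambda>I. c * f I)"
  using rat_decay.mult[OF rat_decay.const, of n N d f c] by simp

lemma rat_decay_diff:
  "rat_decay n N d f \<Longrightarrow> rat_decay n N d g \<Longrightarrow> rat_decay n N d (\<lambda>I. f I - g I)"
  using rat_decay.add[OF _ rat_decay_cmult[of n N d g "-1"]] by simp

lemma rat_decay_sum:
  "finite A \<Longrightarrow> (\<And>x. x \<in> A \<Longrightarrow> rat_decay n N d (f x)) \<Longrightarrow> rat_decay n N d (\<lambda>I. \<Sum>x\<in>A. f x I)"
  by (induction A rule: finite_induct) (simp_all add: rat_decay.zero rat_decay.add)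

lemma rat_decay_mono: "rat_decay n N d f \<Longrightarrow> N \<subseteq> N' \<Longrightarrow> rat_decay n N' d f"
  by (induction rule: rat_decay.induct) (blast intro: rat_decay.intros)+

lemma regular_antimono: "N \<subseteq> N' \<Longrightarrow> regular n N' \<subseteq> regular n N"
  unfolding regular_def by auto

lemma act_dot_upd:
  "act_dot n (I(i := z)) \<nu> = act_dot n I \<nu> + (if i \<in> {1..n} then (z - I i) * of_int (\<nu> i) else 0)"
proof (cases "i \<in> {1..n}")
  case True
  have "act_dot n (I(i := z)) \<nu>
      = (\<Sum>l=1..n. I l * of_int (\<nu> l) + (if l = i then (z - I i) * of_int (\<nu> i) else 0))"
    unfolding act_dot_def by (intro sum.cong) (auto simp: algebra_simps)
  with True show ?thesis by (simp add: sum.distrib act_dot_def)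
qed (auto simp: act_dot_def intro!: sum.cong)

lemma act_dot_has_derivative:
  "((\<lambda>z. act_dot n (I(i := z)) \<nu>) has_field_derivative (if i \<in> {1..n} then of_int (\<nu> i) else 0)) (at x)"
  unfolding act_dot_upd by (auto intro!: derivative_eq_intros)

lemma inverse_act_dot_has_derivative:
  assumes "act_dot n I \<nu> \<noteq> 0"
  shows "((\<lambda>z. inverse (act_dot n (I(i := z)) \<nu>)) has_field_derivative
    - (if i \<in> {1..n} then of_int (\<nu> i) else 0) * inverse (act_dot n I \<nu> ^ 2)) (at (I i))"
proof -
  have "((\<lambda>z. inverse (act_dot n (I(i := z)) \<nu>)) has_field_derivative
      - ((if i \<in> {1..n} then of_int (\<nu> i) else 0) * inverse (act_dot n (I(i := I i)) \<nu> ^ Suc (Suc 0))))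
      (at (I i))"
    by (rule DERIV_inverse_fun) (use assms act_dot_has_derivative in auto)
  moreover have "act_dot n (I(i := I i)) \<nu> ^ Suc (Suc 0) = act_dot n I \<nu> ^ 2"
    by (simp add: numeral_2_eq_2)
  ultimately show ?thesis by (simp only: mult_minus_left)
qed

lemma rat_decay_deriv:
  assumes "rat_decay n N d f"
  shows "\<exists>g. rat_decay n N (Suc d) g \<and>
    (\<forall>I\<in>regular n N. ((\<lambda>z. f (I(i := z))) has_field_derivative g I) (at (I i)))"
  using assms
proof (induction rule: rat_decay.induct)
  case (const c)
  then show ?case by (intro exI[of _ "\<lambda>I. 0"]) (auto intro: rat_decay.zero)
next
  case (zero d)
  then show ?case by (intro exI[of _ "\<lambda>I. 0"]) (auto intro: rat_decay.zero)
next
  case (inverse \<nu>)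
  define c :: complex where "c = (if i \<in> {1..n} then of_int (\<nu> i) else 0)"
  have "rat_decay n N (0 + (1 + 1)) (\<lambda>I. - c * (inverse (act_dot n I \<nu>) * inverse (act_dot n I \<nu>)))"
    by (intro rat_decay.mult rat_decay.const rat_decay.inverse inverse)
  then have "rat_decay n N (Suc 1) (\<lambda>I. - c * inverse (act_dot n I \<nu> ^ 2))"
    by (simp add: power2_eq_square)
  moreover have "act_dot n I \<nu> \<noteq> 0" if "I \<in> regular n N" for I
    using that inverse unfolding regular_def by auto
  ultimately show ?case
    unfolding c_def using inverse_act_dot_has_derivative by blast
next
  case (add d f g)
  then obtain f' g' where "rat_decay n N (Suc d) f'" "rat_decay n N (Suc d) g'"
    "\<forall>I\<in>regular n N. ((\<lambda>z. f (I(i := z))) has_field_derivative f' I) (at (I i))"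
    "\<forall>I\<in>regular n N. ((\<lambda>z. g (I(i := z))) has_field_derivative g' I) (at (I i))" by blast
  then show ?case
    by (intro exI[of _ "\<lambda>I. f' I + g' I"] conjI ballI rat_decay.add DERIV_add) blast+
next
  case (mult d f e g)
  then obtain f' g' where f': "rat_decay n N (Suc d) f'" and g': "rat_decay n N (Suc e) g'"
    and df: "\<forall>I\<in>regular n N. ((\<lambda>z. f (I(i := z))) has_field_derivative f' I) (at (I i))"
    and dg: "\<forall>I\<in>regular n N. ((\<lambda>z. g (I(i := z))) has_field_derivative g' I) (at (I i))" by blast
  have "rat_decay n N (Suc (d + e)) (\<lambda>I. f' I * g I)"
    using rat_decay.mult[OF f' mult.hyps(2)] by simp
  moreover have "rat_decay n N (Suc (d + e)) (\<lambda>I. f I * g' I)"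
    using rat_decay.mult[OF mult.hyps(1) g'] by simp
  ultimately have "rat_decay n N (Suc (d + e)) (\<lambda>I. f' I * g I + f I * g' I)"
    by (rule rat_decay.add)
  moreover have "((\<lambda>z. f (I(i := z)) * g (I(i := z))) has_field_derivative f' I * g I + f I * g' I)
      (at (I i))" if "I \<in> regular n N" for I
    using DERIV_mult[OF bspec[OF df that] bspec[OF dg that]] by (simp add: mult.commute)
  ultimately show ?case by blast
next
  case (weaken d f e)
  then show ?case using rat_decay.weaken[of n N "Suc d" _ "Suc e"] by blast
qed

section \<open>Estimates on the complex domain\<close>

definition action_box :: "nat \<Rightarrow> nat \<Rightarrow> real \<Rightarrow> real \<Rightarrow> (nat \<Rightarrow> complex) set" where
  "action_box n k L r = {I. \<forall>i\<in>{1..n}. cmod (I i - (if i = k then of_real L else 0)) < r * L}"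

definition nonres_modes :: "nat \<Rightarrow> (nat \<Rightarrow> int) set \<Rightarrow> bool" where
  "nonres_modes k N \<longleftrightarrow> finite N \<and> (\<forall>\<nu>\<in>N. \<nu> k \<noteq> 0)"

text \<open>A radius for which \<open>|I\<cdot>\<nu>| \<ge> L/2\<close> on the box for every \<open>\<nu> \<in> N\<close>.\<close>
definition safe_radius :: "nat \<Rightarrow> (nat \<Rightarrow> int) set \<Rightarrow> real" where
  "safe_radius n N = 1 / (2 * (1 + (\<Sum>\<nu>\<in>N. \<Sum>i=1..n. \<bar>real_of_int (\<nu> i)\<bar>)))"

lemma safe_radius_pos: "finite N \<Longrightarrow> safe_radius n N > 0"
  unfolding safe_radius_def by (auto intro!: add_pos_nonneg sum_nonneg)

lemma safe_radius_le:
  assumes "finite N" "\<nu> \<in> N" "0 \<le> r" "r \<le> safe_radius n N"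
  shows "r * (\<Sum>i=1..n. \<bar>real_of_int (\<nu> i)\<bar>) \<le> 1/2"
proof -
  define T where "T = (\<Sum>\<nu>\<in>N. \<Sum>i=1..n. \<bar>real_of_int (\<nu> i)\<bar>)"
  have "(\<Sum>i=1..n. \<bar>real_of_int (\<nu> i)\<bar>) \<le> T"
    unfolding T_def using assms by (intro member_le_sum) (auto intro: sum_nonneg)
  moreover have "T \<ge> 0" unfolding T_def by (auto intro!: sum_nonneg)
  ultimately have "safe_radius n N * (\<Sum>i=1..n. \<bar>real_of_int (\<nu> i)\<bar>) \<le> 1/2"
    unfolding safe_radius_def T_def[symmetric] by (simp add: field_simps)
  moreover have "r * (\<Sum>i=1..n. \<bar>real_of_int (\<nu> i)\<bar>) \<le> safe_radius n N * (\<Sum>i=1..n. \<bar>real_of_int (\<nu> i)\<bar>)"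
    using assms by (intro mult_right_mono sum_nonneg) auto
  ultimately show ?thesis by linarith
qed

lemma norm_act_dot_lower:
  assumes k: "k \<in> {1..n}" and nk: "\<nu> k \<noteq> 0" and L: "L > 0"
    and r: "r * (\<Sum>i=1..n. \<bar>real_of_int (\<nu> i)\<bar>) \<le> 1/2" and I: "I \<in> action_box n k L r"
  shows "cmod (act_dot n I \<nu>) \<ge> L / 2"
proof -
  define D where "D i = I i - (if i = k then of_real L else 0)" for i
  have "act_dot n I \<nu> = (\<Sum>i=1..n. (if i = k then of_real L * of_int (\<nu> k) else 0)) + (\<Sum>i=1..n. D i * of_int (\<nu> i))"
    unfolding act_dot_def D_def sum.distrib[symmetric] by (intro sum.cong) (auto simp: algebra_simps)
  also have "(\<Sum>i=1..n. (if i = k then of_real L * of_int (\<nu> k) else 0)) = of_real L * of_int (\<nu> k)"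
    using k by simp
  finally have eq: "act_dot n I \<nu> = of_real L * of_int (\<nu> k) + (\<Sum>i=1..n. D i * of_int (\<nu> i))" .
  have "cmod (\<Sum>i=1..n. D i * of_int (\<nu> i)) \<le> (\<Sum>i=1..n. r * L * \<bar>real_of_int (\<nu> i)\<bar>)"
  proof (rule order.trans[OF norm_sum sum_mono])
    fix i assume "i \<in> {1..n}"
    then have "cmod (D i) \<le> r * L" using I unfolding action_box_def D_def by fastforce
    then show "cmod (D i * of_int (\<nu> i)) \<le> r * L * \<bar>real_of_int (\<nu> i)\<bar>"
      by (simp add: norm_mult mult_right_mono)
  qed
  also have "\<dots> = L * (r * (\<Sum>i=1..n. \<bar>real_of_int (\<nu> i)\<bar>))"
    by (simp add: sum_distrib_left algebra_simps)
  also have "\<dots> \<le> L / 2" using L r by (simp add: mult_left_mono[of _ "1/2"])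
  finally have small: "cmod (\<Sum>i=1..n. D i * of_int (\<nu> i)) \<le> L / 2" .
  have "L \<le> L * \<bar>real_of_int (\<nu> k)\<bar>" using nk L by (simp add: mult_le_cancel_left1)
  also have "\<dots> = cmod (of_real L * of_int (\<nu> k) :: complex)" using L by (simp add: norm_mult)
  also have "\<dots> \<le> cmod (act_dot n I \<nu>) + cmod (\<Sum>i=1..n. D i * of_int (\<nu> i))"
    unfolding eq by (metis add_diff_cancel_right' norm_triangle_ineq4)
  finally show ?thesis using small by linarith
qed

lemma action_box_regular:
  assumes "nonres_modes k N" "k \<in> {1..n}" "0 \<le> r" "r \<le> safe_radius n N" "L > 0"
    and I: "I \<in> action_box n k L r"
  shows "I \<in> regular n N" and "\<And>\<nu>. \<nu> \<in> N \<Longrightarrow> cmod (act_dot n I \<nu>) \<ge> L / 2"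
proof -
  show low: "cmod (act_dot n I \<nu>) \<ge> L / 2" if "\<nu> \<in> N" for \<nu>
    using assms that safe_radius_le[of N \<nu> r n]
    by (intro norm_act_dot_lower[OF _ _ _ _ I]) (auto simp: nonres_modes_def)
  show "I \<in> regular n N"
    unfolding regular_def using low assms(5) by fastforce
qed

lemma rat_decay_bound:
  assumes "rat_decay n N d f" "nonres_modes k N" "k \<in> {1..n}" "0 \<le> r" "r \<le> safe_radius n N"
  shows "\<exists>K\<ge>0. \<forall>L\<ge>1. \<forall>I\<in>action_box n k L r. cmod (f I) \<le> K / L ^ d"
  using assms(1)
proof (induction rule: rat_decay.induct)
  case (const c)
  then show ?case by (intro exI[of _ "cmod c"]) auto
next
  case (zero d)
  then show ?case by (intro exI[of _ 0]) auto
next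
  case (inverse \<nu>)
  have "cmod (inverse (act_dot n I \<nu>)) \<le> 2 / L ^ 1" if "L \<ge> 1" "I \<in> action_box n k L r" for L I
  proof -
    have "L / 2 \<le> cmod (act_dot n I \<nu>)"
      using action_box_regular(2)[OF assms(2-5) _ that(2) inverse] that(1) by simp
    then have "inverse (cmod (act_dot n I \<nu>)) \<le> inverse (L / 2)"
      using that(1) by (intro le_imp_inverse_le) auto
    then show ?thesis by (simp add: norm_inverse)
  qed
  then show ?case by (intro exI[of _ 2]) auto
next
  case (add d f g)
  then obtain K1 K2 where "K1 \<ge> 0" "K2 \<ge> 0" "\<forall>L\<ge>1. \<forall>I\<in>action_box n k L r. cmod (f I) \<le> K1 / L ^ d"
    "\<forall>L\<ge>1. \<forall>I\<in>action_box n k L r. cmod (g I) \<le> K2 / L ^ d" by blast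
  then show ?case
    by (intro exI[of _ "K1 + K2"])
      (auto simp: add_divide_distrib intro!: order.trans[OF norm_triangle_ineq] add_mono)
next
  case (mult d f e g)
  then obtain K1 K2 where K: "K1 \<ge> 0" "K2 \<ge> 0"
    "\<forall>L\<ge>1. \<forall>I\<in>action_box n k L r. cmod (f I) \<le> K1 / L ^ d"
    "\<forall>L\<ge>1. \<forall>I\<in>action_box n k L r. cmod (g I) \<le> K2 / L ^ e" by blast
  have "cmod (f I * g I) \<le> K1 * K2 / L ^ (d + e)" if "L \<ge> 1" "I \<in> action_box n k L r" for L I
  proof -
    have "cmod (f I * g I) \<le> (K1 / L ^ d) * (K2 / L ^ e)"
      unfolding norm_mult using K that by (intro mult_mono) auto
    then show ?thesis by (simp add: power_add)
  qed
  then show ?case using K by (intro exI[of _ "K1 * K2"]) auto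
next
  case (weaken d f e)
  then obtain K where K: "K \<ge> 0" "\<forall>L\<ge>1. \<forall>I\<in>action_box n k L r. cmod (f I) \<le> K / L ^ d" by blast
  have "K / L ^ d \<le> K / L ^ e" if "L \<ge> 1" for L :: real
    using K(1) that weaken.hyps(2) by (intro divide_left_mono power_increasing) auto
  then show ?case using K by (intro exI[of _ K]) force
qed

lemma norm_exp_mu_dot_phi_le:
  assumes "\<forall>i\<in>{1..n}. \<bar>Im (\<phi> i)\<bar> < \<sigma>"
  shows "cmod (exp (\<i> * mu_dot_phi n \<mu> \<phi>)) \<le> exp (\<sigma> * (\<Sum>i=1..n. \<bar>real_of_int (\<mu> i)\<bar>))"
proof -
  have "cmod (exp (\<i> * mu_dot_phi n \<mu> \<phi>)) = exp (- (\<Sum>i=1..n. real_of_int (\<mu> i) * Im (\<phi> i)))"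
    by (simp add: mu_dot_phi_def)
  also have "- (\<Sum>i=1..n. real_of_int (\<mu> i) * Im (\<phi> i)) \<le> (\<Sum>i=1..n. \<bar>real_of_int (\<mu> i) * Im (\<phi> i)\<bar>)"
    by (rule order.trans[OF _ sum_abs]) simp
  also have "\<dots> \<le> (\<Sum>i=1..n. \<sigma> * \<bar>real_of_int (\<mu> i)\<bar>)"
  proof (intro sum_mono)
    fix i assume "i \<in> {1..n}"
    then have "\<bar>Im (\<phi> i)\<bar> \<le> \<sigma>" using assms by force
    from mult_right_mono[OF this, of "\<bar>real_of_int (\<mu> i)\<bar>"]
    show "\<bar>real_of_int (\<mu> i) * Im (\<phi> i)\<bar> \<le> \<sigma> * \<bar>real_of_int (\<mu> i)\<bar>"
      by (simp add: abs_mult mult.commute)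
  qed
  finally show ?thesis by (simp add: sum_distrib_left)
qed

section \<open>Finite Fourier sums with decaying coefficients\<close>

definition near ::
    "nat \<Rightarrow> (nat \<Rightarrow> complex) \<Rightarrow> (nat \<Rightarrow> complex) \<Rightarrow> ((nat \<Rightarrow> complex) \<times> (nat \<Rightarrow> complex)) filter" where
  "near n I \<phi> = (INF \<delta>\<in>{0<..}.
     principal {p. \<forall>i\<in>{1..n}. cmod (fst p i - I i) < \<delta> \<and> cmod (snd p i - \<phi> i) < \<delta>})"

lemma eventually_near:
  "eventually P (near n I \<phi>) \<longleftrightarrow>
    (\<exists>\<delta>>0. \<forall>p. (\<forall>i\<in>{1..n}. cmod (fst p i - I i) < \<delta> \<and> cmod (snd p i - \<phi> i) < \<delta>) \<longrightarrow> P p)"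
  unfolding near_def
proof (subst eventually_INF_base)
  fix a b :: real assume "a \<in> {0<..}" "b \<in> {0<..}"
  then show "\<exists>x\<in>{0<..}. principal {p. \<forall>i\<in>{1..n}. cmod (fst p i - I i) < x \<and> cmod (snd p i - \<phi> i) < x}
      \<le> inf (principal {p. \<forall>i\<in>{1..n}. cmod (fst p i - I i) < a \<and> cmod (snd p i - \<phi> i) < a})
            (principal {p. \<forall>i\<in>{1..n}. cmod (fst p i - I i) < b \<and> cmod (snd p i - \<phi> i) < b})"
    by (intro bexI[of _ "min a b"]) auto
qed (auto simp: eventually_principal)

lemma tendsto_fst_near: "i \<in> {1..n} \<Longrightarrow> ((\<lambda>p. fst p i) \<longlongrightarrow> I i) (near n I \<phi>)"
  unfolding tendsto_iff dist_norm eventually_near by blast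

lemma tendsto_snd_near: "i \<in> {1..n} \<Longrightarrow> ((\<lambda>p. snd p i) \<longlongrightarrow> \<phi> i) (near n I \<phi>)"
  unfolding tendsto_iff dist_norm eventually_near by blast

lemma tendsto_act_dot_near: "((\<lambda>p. act_dot n (fst p) \<nu>) \<longlongrightarrow> act_dot n I \<nu>) (near n I \<phi>)"
  unfolding act_dot_def by (intro tendsto_intros tendsto_fst_near) auto

lemma rat_decay_tendsto_near:
  assumes "rat_decay n N d f" "I \<in> regular n N"
  shows "((\<lambda>p. f (fst p)) \<longlongrightarrow> f I) (near n I \<phi>)"
  using assms(1)
proof (induction rule: rat_decay.induct)
  case (inverse \<nu>)
  then have "act_dot n I \<nu> \<noteq> 0" using assms(2) unfolding regular_def by auto
  then show ?case by (intro tendsto_inverse tendsto_act_dot_near)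
qed (auto intro: tendsto_intros)

lemma eventually_near_regular:
  "finite N \<Longrightarrow> I \<in> regular n N \<Longrightarrow> eventually (\<lambda>p. fst p \<in> regular n N) (near n I \<phi>)"
  unfolding regular_def
  by (auto intro!: eventually_ball_finite tendsto_imp_eventually_ne[OF tendsto_act_dot_near])

lemma eventually_upd_regular:
  assumes "finite N" "I \<in> regular n N"
  shows "eventually (\<lambda>z. I(i := z) \<in> regular n N) (nhds (I i))"
  unfolding regular_def mem_Collect_eq
proof (intro eventually_ball_finite ballI assms(1))
  fix \<nu> assume "\<nu> \<in> N"
  then have "act_dot n (I(i := I i)) \<nu> \<noteq> 0" using assms(2) unfolding regular_def by simp
  moreover have "isCont (\<lambda>z. act_dot n (I(i := z)) \<nu>) (I i)"
    using act_dot_has_derivative DERIV_isCont by blast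
  then have "((\<lambda>z. act_dot n (I(i := z)) \<nu>) \<longlongrightarrow> act_dot n (I(i := I i)) \<nu>) (nhds (I i))"
    by (simp add: isCont_def tendsto_nhds_iff)
  ultimately show "eventually (\<lambda>z. act_dot n (I(i := z)) \<nu> \<noteq> 0) (nhds (I i))"
    by (intro tendsto_imp_eventually_ne)
qed

lemma mu_dot_phi_eq_act_dot: "mu_dot_phi n \<mu> \<phi> = act_dot n \<phi> \<mu>"
  unfolding mu_dot_phi_def act_dot_def by (simp add: mult.commute)

lemma near_tendsto_imp_small_dist:
  assumes "((\<lambda>p. F (fst p) (snd p)) \<longlongrightarrow> F I \<phi>) (near n I \<phi>)" "\<epsilon> > 0"
  shows "\<exists>\<delta>>0. \<forall>I' \<phi>'. (\<forall>i\<in>{1..n}. cmod (I' i - I i) < \<delta> \<and> cmod (\<phi>' i - \<phi> i) < \<delta>) \<and>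
      (\<forall>i. i \<notin> {1..n} \<longrightarrow> I' i = I i \<and> \<phi>' i = \<phi> i) \<longrightarrow> cmod (F I' \<phi>' - F I \<phi>) < \<epsilon>"
proof -
  obtain \<delta> where "\<delta> > 0" and \<delta>: "\<forall>p. (\<forall>i\<in>{1..n}. cmod (fst p i - I i) < \<delta> \<and>
      cmod (snd p i - \<phi> i) < \<delta>) \<longrightarrow> cmod (F (fst p) (snd p) - F I \<phi>) < \<epsilon>"
    using assms unfolding tendsto_iff eventually_near dist_norm by blast
  show ?thesis
  proof (intro exI[of _ \<delta>] conjI allI impI)
    fix I' \<phi>' assume "(\<forall>i\<in>{1..n}. cmod (I' i - I i) < \<delta> \<and> cmod (\<phi>' i - \<phi> i) < \<delta>) \<and>
      (\<forall>i. i \<notin> {1..n} \<longrightarrow> I' i = I i \<and> \<phi>' i = \<phi> i)"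
    then show "cmod (F I' \<phi>' - F I \<phi>) < \<epsilon>" using \<delta>[rule_format, of "(I', \<phi>')"] by simp
  qed fact
qed

context
  fixes n :: nat and N :: "(nat \<Rightarrow> int) set" and S :: "(nat \<Rightarrow> int) set" and d :: nat
    and h :: "(nat \<Rightarrow> int) \<Rightarrow> (nat \<Rightarrow> complex) \<Rightarrow> complex"
    and F :: "(nat \<Rightarrow> complex) \<Rightarrow> (nat \<Rightarrow> complex) \<Rightarrow> complex"
  assumes fN: "finite N" and S: "finite S" and decay: "\<forall>\<mu>\<in>S. rat_decay n N d (h \<mu>)"
    and eq: "\<And>I \<phi>. I \<in> regular n N \<Longrightarrow> F I \<phi> = (\<Sum>\<mu>\<in>S. h \<mu> I * exp (\<i> * mu_dot_phi n \<mu> \<phi>))"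
begin

lemma fourier_sum_tendsto_near:
  assumes I: "I \<in> regular n N"
  shows "((\<lambda>p. F (fst p) (snd p)) \<longlongrightarrow> F I \<phi>) (near n I \<phi>)"
proof -
  have "((\<lambda>p. \<Sum>\<mu>\<in>S. h \<mu> (fst p) * exp (\<i> * mu_dot_phi n \<mu> (snd p))) \<longlongrightarrow>
      (\<Sum>\<mu>\<in>S. h \<mu> I * exp (\<i> * mu_dot_phi n \<mu> \<phi>))) (near n I \<phi>)"
    using decay unfolding mu_dot_phi_def
    by (intro tendsto_intros rat_decay_tendsto_near[OF _ I] tendsto_snd_near) auto
  moreover have "eventually (\<lambda>p. F (fst p) (snd p) =
      (\<Sum>\<mu>\<in>S. h \<mu> (fst p) * exp (\<i> * mu_dot_phi n \<mu> (snd p)))) (near n I \<phi>)"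
    using eventually_near_regular[OF fN I] by eventually_elim (use eq in auto)
  ultimately show ?thesis
    using eq[OF I] by (simp add: tendsto_cong)
qed

lemma fourier_sum_differentiable_action:
  assumes I: "I \<in> regular n N"
  shows "(\<lambda>z. F (I(i := z)) \<phi>) field_differentiable (at (I i))"
proof -
  have "\<forall>\<mu>\<in>S. \<exists>g. ((\<lambda>z. h \<mu> (I(i := z))) has_field_derivative g) (at (I i))"
  proof
    fix \<mu> assume "\<mu> \<in> S"
    with decay obtain g' where "\<forall>I\<in>regular n N. ((\<lambda>z. h \<mu> (I(i := z))) has_field_derivative g' I) (at (I i))"
      using rat_decay_deriv by blast
    with I show "\<exists>g. ((\<lambda>z. h \<mu> (I(i := z))) has_field_derivative g) (at (I i))" by blast
  qed
  from bchoice[OF this] obtain g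
    where g: "\<forall>\<mu>\<in>S. ((\<lambda>z. h \<mu> (I(i := z))) has_field_derivative g \<mu>) (at (I i))" by blast
  have deriv: "((\<lambda>z. \<Sum>\<mu>\<in>S. h \<mu> (I(i := z)) * exp (\<i> * mu_dot_phi n \<mu> \<phi>)) has_field_derivative
      (\<Sum>\<mu>\<in>S. g \<mu> * exp (\<i> * mu_dot_phi n \<mu> \<phi>))) (at (I i))"
    using g by (intro DERIV_sum DERIV_cmult_right) auto
  have "eventually (\<lambda>z. F (I(i := z)) \<phi> =
      (\<Sum>\<mu>\<in>S. h \<mu> (I(i := z)) * exp (\<i> * mu_dot_phi n \<mu> \<phi>))) (nhds (I i))"
    using eventually_upd_regular[OF fN I, of i] by eventually_elim (use eq in auto)
  from DERIV_cong_ev[OF refl this refl] deriv show ?thesis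
    unfolding field_differentiable_def by blast
qed

lemma fourier_sum_differentiable_angle:
  assumes I: "I \<in> regular n N"
  shows "(\<lambda>z. F I (\<phi>(i := z))) field_differentiable (at (\<phi> i))"
proof -
  have "((\<lambda>z. \<Sum>\<mu>\<in>S. h \<mu> I * exp (\<i> * act_dot n (\<phi>(i := z)) \<mu>)) has_field_derivative
      (\<Sum>\<mu>\<in>S. h \<mu> I * (exp (\<i> * act_dot n (\<phi>(i := \<phi> i)) \<mu>) *
        (\<i> * (if i \<in> {1..n} then of_int (\<mu> i) else 0))))) (at (\<phi> i))"
    by (intro DERIV_sum DERIV_cmult DERIV_exp[THEN DERIV_chain2] act_dot_has_derivative)
  then show ?thesis
    using eq[OF I] unfolding field_differentiable_def mu_dot_phi_eq_act_dot by auto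
qed

lemma holo_on_fourier_sum:
  assumes D: "\<And>I \<phi>. (I, \<phi>) \<in> D \<Longrightarrow> I \<in> regular n N"
  shows "holo_on n F D"
  unfolding holo_on_def
proof (intro conjI ballI)
  fix p assume "p \<in> D"
  moreover obtain I \<phi> where "p = (I, \<phi>)" by fastforce
  ultimately have p: "p = (I, \<phi>)" and I: "I \<in> regular n N" using D by auto
  show "case p of (I, \<phi>) \<Rightarrow> \<forall>\<epsilon>>0. \<exists>\<delta>>0. \<forall>I' \<phi>'.
      (\<forall>i\<in>{1..n}. cmod (I' i - I i) < \<delta> \<and> cmod (\<phi>' i - \<phi> i) < \<delta>) \<and>
      (\<forall>i. i \<notin> {1..n} \<longrightarrow> I' i = I i \<and> \<phi>' i = \<phi> i) \<longrightarrow> cmod (F I' \<phi>' - F I \<phi>) < \<epsilon>"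
    unfolding p using near_tendsto_imp_small_dist[OF fourier_sum_tendsto_near[OF I]] by simp
  show "case p of (I, \<phi>) \<Rightarrow> \<forall>i\<in>{1..n}. (\<lambda>z. F (I(i := z)) \<phi>) field_differentiable at (I i) \<and>
      (\<lambda>z. F I (\<phi>(i := z))) field_differentiable at (\<phi> i)"
    unfolding p using fourier_sum_differentiable_action[OF I] fourier_sum_differentiable_angle[OF I]
    by simp
qed

end

lemma Dom_iff:
  "(I, \<phi>) \<in> Dom n k L r \<sigma> \<longleftrightarrow> I \<in> action_box n k L r \<and> (\<forall>i\<in>{1..n}. \<bar>Im (\<phi> i)\<bar> < \<sigma>)"
  unfolding Dom_def action_box_def by auto

lemma bigO_fin_fourier_sum:
  assumes N: "nonres_modes k N" and k: "k \<in> {1..n}" and S: "finite S"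
    and decay: "\<forall>\<mu>\<in>S. rat_decay n N d (h \<mu>)"
    and eq: "\<And>I \<phi>. I \<in> regular n N \<Longrightarrow> F I \<phi> = (\<Sum>\<mu>\<in>S. h \<mu> I * exp (\<i> * mu_dot_phi n \<mu> \<phi>))"
  shows "bigO_fin n k F (- real d)"
proof -
  have fN: "finite N" using N unfolding nonres_modes_def by auto
  define r where "r = safe_radius n N"
  have r: "r > 0" unfolding r_def using safe_radius_pos[OF fN] .
  have reg: "I \<in> regular n N" if "(I, \<phi>) \<in> Dom n k L r 1" "L \<ge> 1" for I \<phi> L
    using that r action_box_regular(1)[OF N k, of r L I] by (auto simp: Dom_iff r_def)
  have "\<forall>\<mu>\<in>S. \<exists>K\<ge>0. \<forall>L\<ge>1. \<forall>I\<in>action_box n k L r. cmod (h \<mu> I) \<le> K / L ^ d"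
    using decay rat_decay_bound[OF _ N k] r unfolding r_def by auto
  then obtain K where K: "\<forall>\<mu>\<in>S. K \<mu> \<ge> 0 \<and> (\<forall>L\<ge>1. \<forall>I\<in>action_box n k L r. cmod (h \<mu> I) \<le> K \<mu> / L ^ d)"
    by metis
  define C where "C = 1 + (\<Sum>\<mu>\<in>S. K \<mu> * exp (1 * (\<Sum>i=1..n. \<bar>real_of_int (\<mu> i)\<bar>)))"
  have C: "C > 0" unfolding C_def using K by (intro add_pos_nonneg sum_nonneg) auto
  have bound: "cmod (F I \<phi>) \<le> C * L powr (- real d)"
    if L: "L \<ge> 1" and p: "(I, \<phi>) \<in> Dom n k L r 1" for L I \<phi>
  proof -
    have "cmod (F I \<phi>) \<le> (\<Sum>\<mu>\<in>S. cmod (h \<mu> I * exp (\<i> * mu_dot_phi n \<mu> \<phi>)))"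
      unfolding eq[OF reg[OF p L]] by (rule norm_sum)
    also have "\<dots> \<le> (\<Sum>\<mu>\<in>S. K \<mu> / L ^ d * exp (1 * (\<Sum>i=1..n. \<bar>real_of_int (\<mu> i)\<bar>)))"
      unfolding norm_mult using K L p
      by (intro sum_mono mult_mono norm_exp_mu_dot_phi_le) (auto simp: Dom_iff)
    also have "\<dots> = (C - 1) / L ^ d" unfolding C_def by (simp add: sum_divide_distrib algebra_simps)
    also have "\<dots> \<le> C * L powr (- real d)"
      using L by (simp add: powr_minus powr_realpow divide_inverse)
    finally show ?thesis .
  qed
  have "holo_on n F (Dom n k L r 1)" if "L \<ge> 1" for L
    using holo_on_fourier_sum[OF fN S decay eq, of "Dom n k L r 1"] reg that by blast
  moreover have "\<forall>L\<ge>1. \<forall>(I, \<phi>)\<in>Dom n k L r 1. F I \<phi> = (\<Sum>\<mu>\<in>S. h \<mu> I * exp (\<i> * mu_dot_phi n \<mu> \<phi>))"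
    using eq reg by blast
  ultimately show ?thesis
    unfolding bigO_fin_def using r C bound S
    by (intro exI[of _ r] exI[of _ 1] exI[of _ C] conjI exI[of _ S] exI[of _ h]) auto
qed

lemma not_in_fsupp: "\<mu> \<notin> fsupp c \<Longrightarrow> c \<mu> I = 0"
  unfolding fsupp_def by auto

lemma in_fsupp: "c \<mu> I \<noteq> 0 \<Longrightarrow> \<mu> \<in> fsupp c"
  unfolding fsupp_def by (auto simp: fun_eq_iff)

lemma fsupp_subsetI: "(\<And>\<mu> I. c \<mu> I \<noteq> 0 \<Longrightarrow> \<mu> \<in> S) \<Longrightarrow> fsupp c \<subseteq> S"
  unfolding fsupp_def by (auto simp: fun_eq_iff)

lemma fmult_eq_sum:
  "finite S \<Longrightarrow> fsupp c \<subseteq> S \<Longrightarrow> fmult c d \<mu> I = (\<Sum>\<nu>\<in>S. c \<nu> I * d (\<mu> - \<nu>) I)"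
  unfolding fmult_def by (rule sum.mono_neutral_left) (auto simp: not_in_fsupp intro: in_fsupp)

lemma feval_eq_sum:
  "finite S \<Longrightarrow> fsupp c \<subseteq> S \<Longrightarrow> feval n c I \<phi> = (\<Sum>\<mu>\<in>S. c \<mu> I * exp (\<i> * mu_dot_phi n \<mu> \<phi>))"
  unfolding feval_def by (rule sum.mono_neutral_left) (auto simp: not_in_fsupp intro: in_fsupp)

lemma fsupp_cmult: "fsupp (\<lambda>\<mu> I. w \<mu> * c \<mu> I) \<subseteq> fsupp c"
  by (rule fsupp_subsetI) (auto intro: in_fsupp)

lemma fsupp_fscale: "fsupp (fscale a c) \<subseteq> fsupp c"
  unfolding fscale_def by (rule fsupp_cmult)

lemma fsupp_dphi: "fsupp (dphi i c) \<subseteq> fsupp c"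
  unfolding dphi_def by (rule fsupp_subsetI) (auto intro: in_fsupp)

lemma fsupp_Qop: "fsupp (Qop n k c) \<subseteq> fsupp c"
  unfolding Qop_def by (rule fsupp_subsetI) (auto intro: in_fsupp split: if_splits)

lemma fsupp_dI: "fsupp (dI i c) \<subseteq> fsupp c"
proof (rule fsupp_subsetI)
  fix \<mu> I assume nz: "dI i c \<mu> I \<noteq> 0"
  show "\<mu> \<in> fsupp c"
  proof (rule ccontr)
    assume "\<mu> \<notin> fsupp c"
    then have "c \<mu> = (\<lambda>_. 0)" unfolding fsupp_def by simp
    then show False using nz unfolding dI_def by simp
  qed
qed

lemma fsupp_fadd: "fsupp (fadd c c') \<subseteq> fsupp c \<union> fsupp c'"
  unfolding fadd_def by (rule fsupp_subsetI) (auto simp: not_in_fsupp intro: in_fsupp)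

lemma fsupp_fsub: "fsupp (fsub c c') \<subseteq> fsupp c \<union> fsupp c'"
  unfolding fsub_def by (rule fsupp_subsetI) (auto simp: not_in_fsupp intro: in_fsupp)

lemma fsupp_fmult:
  "fsupp (fmult c d) \<subseteq> (\<lambda>(a, b) l. a l + b l) ` (fsupp c \<times> fsupp d)"
proof (rule fsupp_subsetI)
  fix \<mu> I assume "fmult c d \<mu> I \<noteq> 0"
  then obtain \<nu> where "\<nu> \<in> fsupp c" "c \<nu> I * d (\<mu> - \<nu>) I \<noteq> 0"
    unfolding fmult_def by (rule sum.not_neutral_contains_not_neutral)
  then show "\<mu> \<in> (\<lambda>(a, b) l. a l + b l) ` (fsupp c \<times> fsupp d)"
    by (intro image_eqI[of _ _ "(\<nu>, \<mu> - \<nu>)"]) (auto simp: fun_diff_def intro: in_fsupp)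
qed

lemma finite_fsupp_fmult: "finite (fsupp c) \<Longrightarrow> finite (fsupp d) \<Longrightarrow> finite (fsupp (fmult c d))"
  using fsupp_fmult finite_subset by blast

lemmas finite_fsupp_dphi = finite_subset[OF fsupp_dphi]
  and finite_fsupp_dI = finite_subset[OF fsupp_dI]
  and finite_fsupp_Qop = finite_subset[OF fsupp_Qop]
  and finite_fsupp_fscale = finite_subset[OF fsupp_fscale]

lemma finite_fsupp_fadd: "finite (fsupp c) \<Longrightarrow> finite (fsupp c') \<Longrightarrow> finite (fsupp (fadd c c'))"
  using fsupp_fadd finite_subset by blast

section \<open>Fourier data with coefficients of a given order\<close>

definition fourier_decay :: "nat \<Rightarrow> (nat \<Rightarrow> int) set \<Rightarrow> nat \<Rightarrow> fdata \<Rightarrow> bool" where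
  "fourier_decay n N d c \<longleftrightarrow>
     finite (fsupp c) \<and> (\<forall>\<mu>. \<exists>f. rat_decay n N d f \<and> (\<forall>I\<in>regular n N. c \<mu> I = f I))"

lemma fourier_decay_finite: "fourier_decay n N d c \<Longrightarrow> finite (fsupp c)"
  unfolding fourier_decay_def by auto

lemma fourier_decay_coeff:
  "fourier_decay n N d c \<Longrightarrow> \<exists>f. rat_decay n N d f \<and> (\<forall>I\<in>regular n N. c \<mu> I = f I)"
  unfolding fourier_decay_def by auto

lemma fourier_decay_coeffs:
  assumes "fourier_decay n N d c"
  obtains F where "\<And>\<mu>. rat_decay n N d (F \<mu>)" "\<And>\<mu> I. I \<in> regular n N \<Longrightarrow> c \<mu> I = F \<mu> I"
proof -
  have "\<forall>\<mu>. \<exists>f. rat_decay n N d f \<and> (\<forall>I\<in>regular n N. c \<mu> I = f I)"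
    using fourier_decay_coeff[OF assms] by blast
  then show ?thesis using that by metis
qed

lemma fourier_decayI:
  assumes "finite S" "fsupp c \<subseteq> S" "\<And>\<mu>. \<exists>f. rat_decay n N d f \<and> (\<forall>I\<in>regular n N. c \<mu> I = f I)"
  shows "fourier_decay n N d c"
  unfolding fourier_decay_def using assms finite_subset by blast

lemma fourier_decay_mono:
  assumes "fourier_decay n N d c" "N \<subseteq> N'"
  shows "fourier_decay n N' d c"
proof -
  have "\<exists>f. rat_decay n N' d f \<and> (\<forall>I\<in>regular n N'. c \<mu> I = f I)" for \<mu>
    using fourier_decay_coeff[OF assms(1), of \<mu>] rat_decay_mono[OF _ assms(2)]
      regular_antimono[OF assms(2)] by blast
  then show ?thesis unfolding fourier_decay_def using fourier_decay_finite[OF assms(1)] by blast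
qed

lemma fourier_decay_weaken: "fourier_decay n N d c \<Longrightarrow> e \<le> d \<Longrightarrow> fourier_decay n N e c"
  unfolding fourier_decay_def using rat_decay.weaken by blast

lemma fourier_decay_fadd:
  assumes "fourier_decay n N d c" "fourier_decay n N d c'"
  shows "fourier_decay n N d (fadd c c')"
proof (rule fourier_decayI[OF _ fsupp_fadd])
  show "finite (fsupp c \<union> fsupp c')" using assms fourier_decay_finite by blast
  fix \<mu>
  obtain f where "rat_decay n N d f" "\<forall>I\<in>regular n N. c \<mu> I = f I"
    using fourier_decay_coeff[OF assms(1)] by blast
  moreover obtain g where "rat_decay n N d g" "\<forall>I\<in>regular n N. c' \<mu> I = g I"
    using fourier_decay_coeff[OF assms(2)] by blast
  ultimately show "\<exists>h. rat_decay n N d h \<and> (\<forall>I\<in>regular n N. fadd c c' \<mu> I = h I)"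
    by (intro exI[of _ "\<lambda>I. f I + g I"]) (auto simp: fadd_def intro: rat_decay.add)
qed

lemma fourier_decay_fsub:
  assumes "fourier_decay n N d c" "fourier_decay n N d c'"
  shows "fourier_decay n N d (fsub c c')"
proof (rule fourier_decayI[OF _ fsupp_fsub])
  show "finite (fsupp c \<union> fsupp c')" using assms fourier_decay_finite by blast
  fix \<mu>
  obtain f where "rat_decay n N d f" "\<forall>I\<in>regular n N. c \<mu> I = f I"
    using fourier_decay_coeff[OF assms(1)] by blast
  moreover obtain g where "rat_decay n N d g" "\<forall>I\<in>regular n N. c' \<mu> I = g I"
    using fourier_decay_coeff[OF assms(2)] by blast
  ultimately show "\<exists>h. rat_decay n N d h \<and> (\<forall>I\<in>regular n N. fsub c c' \<mu> I = h I)"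
    by (intro exI[of _ "\<lambda>I. f I - g I"]) (auto simp: fsub_def intro: rat_decay_diff)
qed

lemma fourier_decay_cmult:
  assumes "fourier_decay n N d c"
  shows "fourier_decay n N d (\<lambda>\<mu> I. w \<mu> * c \<mu> I)"
proof (rule fourier_decayI[OF _ fsupp_cmult])
  show "finite (fsupp c)" using assms fourier_decay_finite by blast
  fix \<mu>
  obtain f where "rat_decay n N d f" "\<forall>I\<in>regular n N. c \<mu> I = f I"
    using fourier_decay_coeff[OF assms] by blast
  then show "\<exists>h. rat_decay n N d h \<and> (\<forall>I\<in>regular n N. w \<mu> * c \<mu> I = h I)"
    by (intro exI[of _ "\<lambda>I. w \<mu> * f I"]) (auto intro: rat_decay_cmult)
qed

lemma fourier_decay_fscale: "fourier_decay n N d c \<Longrightarrow> fourier_decay n N d (fscale a c)"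
  unfolding fscale_def by (rule fourier_decay_cmult)

lemma fourier_decay_dphi: "fourier_decay n N d c \<Longrightarrow> fourier_decay n N d (dphi i c)"
  unfolding dphi_def using fourier_decay_cmult[of n N d c "\<lambda>\<mu>. \<i> * of_int (\<mu> i)"] by simp

lemma fourier_decay_resp:
  assumes "fourier_decay n N d c"
  shows "fourier_decay n N d (resp k c)"
proof -
  have "resp k c = (\<lambda>\<mu> I. (if \<mu> k = 0 then 1 else 0) * c \<mu> I)"
    unfolding resp_def by (simp add: fun_eq_iff)
  then show ?thesis using fourier_decay_cmult[OF assms, of "\<lambda>\<mu>. if \<mu> k = 0 then 1 else 0"] by (simp only:)
qed

lemma fourier_decay_nresp:
  assumes "fourier_decay n N d c"
  shows "fourier_decay n N d (nresp k c)"
proof -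
  have "nresp k c = (\<lambda>\<mu> I. (if \<mu> k \<noteq> 0 then 1 else 0) * c \<mu> I)"
    unfolding nresp_def by (simp add: fun_eq_iff)
  then show ?thesis using fourier_decay_cmult[OF assms, of "\<lambda>\<mu>. if \<mu> k \<noteq> 0 then 1 else 0"] by (simp only:)
qed

lemma fourier_decay_sum:
  assumes "finite A" "\<And>l. l \<in> A \<Longrightarrow> fourier_decay n N d (c l)"
  shows "fourier_decay n N d (\<lambda>\<mu> I. \<Sum>l\<in>A. c l \<mu> I)"
proof (rule fourier_decayI)
  show "finite (\<Union>l\<in>A. fsupp (c l))" using assms fourier_decay_finite by blast
  show "fsupp (\<lambda>\<mu> I. \<Sum>l\<in>A. c l \<mu> I) \<subseteq> (\<Union>l\<in>A. fsupp (c l))"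
  proof (rule fsupp_subsetI)
    fix \<mu> I assume "(\<Sum>l\<in>A. c l \<mu> I) \<noteq> 0"
    then obtain l where "l \<in> A" "c l \<mu> I \<noteq> 0" by (rule sum.not_neutral_contains_not_neutral)
    then show "\<mu> \<in> (\<Union>l\<in>A. fsupp (c l))" by (auto intro: in_fsupp)
  qed
  fix \<mu>
  have "\<forall>l\<in>A. \<exists>f. rat_decay n N d f \<and> (\<forall>I\<in>regular n N. c l \<mu> I = f I)"
    using assms fourier_decay_coeff by blast
  from bchoice[OF this] obtain F
    where "\<forall>l\<in>A. rat_decay n N d (F l) \<and> (\<forall>I\<in>regular n N. c l \<mu> I = F l I)" by blast
  then show "\<exists>h. rat_decay n N d h \<and> (\<forall>I\<in>regular n N. (\<Sum>l\<in>A. c l \<mu> I) = h I)"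
    using assms(1) by (intro exI[of _ "\<lambda>I. \<Sum>l\<in>A. F l I"]) (auto intro!: rat_decay_sum sum.cong)
qed

lemma fourier_decay_fmult:
  assumes "fourier_decay n N d c" "fourier_decay n N e c'"
  shows "fourier_decay n N (d + e) (fmult c c')"
proof -
  obtain F where F: "\<And>\<mu>. rat_decay n N d (F \<mu>)" "\<And>\<mu> I. I \<in> regular n N \<Longrightarrow> c \<mu> I = F \<mu> I"
    using fourier_decay_coeffs[OF assms(1)] by blast
  obtain G where G: "\<And>\<mu>. rat_decay n N e (G \<mu>)" "\<And>\<mu> I. I \<in> regular n N \<Longrightarrow> c' \<mu> I = G \<mu> I"
    using fourier_decay_coeffs[OF assms(2)] by blast
  have fc: "finite (fsupp c)" using assms fourier_decay_finite by blast
  show ?thesis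
    unfolding fourier_decay_def
  proof (intro conjI allI)
    show "finite (fsupp (fmult c c'))" using finite_fsupp_fmult assms fourier_decay_finite by blast
    show "\<exists>f. rat_decay n N (d + e) f \<and> (\<forall>I\<in>regular n N. fmult c c' \<mu> I = f I)" for \<mu>
      using fc F G by (intro exI[of _ "\<lambda>I. \<Sum>\<nu>\<in>fsupp c. F \<nu> I * G (\<mu> - \<nu>) I"])
        (auto simp: fmult_def intro!: rat_decay_sum rat_decay.mult sum.cong)
  qed
qed

lemma fourier_decay_has_derivative:
  assumes "finite N" "fourier_decay n N d c"
  obtains g where "rat_decay n N (Suc d) g"
    "\<And>I. I \<in> regular n N \<Longrightarrow> ((\<lambda>z. c \<mu> (I(i := z))) has_field_derivative g I) (at (I i))"
proof -
  obtain f where f: "rat_decay n N d f" "\<forall>I\<in>regular n N. c \<mu> I = f I"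
    using fourier_decay_coeff[OF assms(2)] by blast
  obtain g where g: "rat_decay n N (Suc d) g"
    "\<forall>I\<in>regular n N. ((\<lambda>z. f (I(i := z))) has_field_derivative g I) (at (I i))"
    using rat_decay_deriv[OF f(1)] by blast
  have "((\<lambda>z. c \<mu> (I(i := z))) has_field_derivative g I) (at (I i))" if I: "I \<in> regular n N" for I
  proof -
    have "eventually (\<lambda>z. c \<mu> (I(i := z)) = f (I(i := z))) (nhds (I i))"
      using eventually_upd_regular[OF assms(1) I, of i] by eventually_elim (use f in auto)
    from DERIV_cong_ev[OF refl this refl] g(2) I show ?thesis by blast
  qed
  with g(1) show ?thesis using that by blast
qed

lemma fourier_decay_dI_has_derivative:
  assumes "finite N" "fourier_decay n N d c" "I \<in> regular n N"
  shows "((\<lambda>z. c \<mu> (I(i := z))) has_field_derivative dI i c \<mu> I) (at (I i))"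
proof -
  obtain g where "((\<lambda>z. c \<mu> (I(i := z))) has_field_derivative g I) (at (I i))"
    using fourier_decay_has_derivative[OF assms(1,2), of \<mu> i] assms(3) by blast
  moreover from this have "dI i c \<mu> I = g I" unfolding dI_def by (rule DERIV_imp_deriv)
  ultimately show ?thesis by simp
qed

lemma fourier_decay_dI:
  assumes "finite N" "fourier_decay n N d c"
  shows "fourier_decay n N (Suc d) (dI i c)"
proof (rule fourier_decayI[OF _ fsupp_dI])
  show "finite (fsupp c)" using fourier_decay_finite[OF assms(2)] .
  fix \<mu>
  obtain g where "rat_decay n N (Suc d) g"
    "\<And>I. I \<in> regular n N \<Longrightarrow> ((\<lambda>z. c \<mu> (I(i := z))) has_field_derivative g I) (at (I i))"
    using fourier_decay_has_derivative[OF assms, of \<mu> i] by blast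
  then show "\<exists>f. rat_decay n N (Suc d) f \<and> (\<forall>I\<in>regular n N. dI i c \<mu> I = f I)"
    unfolding dI_def by (intro exI[of _ g]) (auto intro: DERIV_imp_deriv)
qed

lemma fourier_decay_Qop:
  assumes "fourier_decay n N d c" "\<forall>\<mu>\<in>fsupp c. \<mu> k \<noteq> 0 \<longrightarrow> \<mu> \<in> N"
  shows "fourier_decay n N (Suc d) (Qop n k c)"
proof (rule fourier_decayI[OF _ fsupp_Qop])
  show "finite (fsupp c)" using assms fourier_decay_finite by blast
  fix \<mu>
  obtain f where f: "rat_decay n N d f" "\<forall>I\<in>regular n N. c \<mu> I = f I"
    using fourier_decay_coeff[OF assms(1)] by blast
  show "\<exists>h. rat_decay n N (Suc d) h \<and> (\<forall>I\<in>regular n N. Qop n k c \<mu> I = h I)"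
  proof (cases "\<mu> k \<noteq> 0 \<and> \<mu> \<in> fsupp c")
    case True
    then have "\<mu> \<in> N" using assms(2) by blast
    then have "rat_decay n N (0 + (d + 1)) (\<lambda>I. - \<i> * (f I * inverse (act_dot n I \<mu>)))"
      by (intro rat_decay.mult rat_decay.const f(1) rat_decay.inverse)
    then show ?thesis using True f(2)
      by (intro exI[of _ "\<lambda>I. - \<i> * (f I * inverse (act_dot n I \<mu>))"])
        (auto simp: Qop_def act_dot_def divide_inverse)
  next
    case False
    then show ?thesis
      by (intro exI[of _ "\<lambda>I. 0"]) (auto simp: Qop_def not_in_fsupp intro: rat_decay.zero)
  qed
qed

lemma fourier_decay_pbracket:
  assumes "finite N" "fourier_decay n N d F" "fourier_decay n N e G"
  shows "fourier_decay n N (Suc (d + e)) (pbracket n F G)"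
  unfolding pbracket_def
proof (rule fourier_decay_sum)
  fix i
  have "fourier_decay n N (d + Suc e) (fmult (dphi i F) (dI i G))"
    by (intro fourier_decay_fmult fourier_decay_dphi fourier_decay_dI assms)
  moreover have "fourier_decay n N (Suc d + e) (fmult (dI i F) (dphi i G))"
    by (intro fourier_decay_fmult fourier_decay_dphi fourier_decay_dI assms)
  ultimately show "fourier_decay n N (Suc (d + e))
      (fsub (fmult (dphi i F) (dI i G)) (fmult (dI i F) (dphi i G)))"
    by (simp add: fourier_decay_fsub)
qed simp

lemma fourier_decay_adpow:
  assumes "finite N" "fourier_decay n N d G" "fourier_decay n N e ch"
  shows "fourier_decay n N (d + s * Suc e) (adpow n ch s G)"
proof (induction s)
  case (Suc s)
  from fourier_decay_pbracket[OF assms(1) Suc assms(3)] show ?case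
    by (simp add: algebra_simps)
qed (use assms in simp)

definition agree :: "nat \<Rightarrow> (nat \<Rightarrow> int) set \<Rightarrow> fdata \<Rightarrow> fdata \<Rightarrow> bool" where
  "agree n N c d \<longleftrightarrow> (\<forall>\<mu>. \<forall>I\<in>regular n N. c \<mu> I = d \<mu> I)"

lemma agreeD: "agree n N c d \<Longrightarrow> I \<in> regular n N \<Longrightarrow> c \<mu> I = d \<mu> I"
  unfolding agree_def by blast

lemma agree_refl: "agree n N c c"
  unfolding agree_def by auto

lemma agree_sym: "agree n N c d \<Longrightarrow> agree n N d c"
  unfolding agree_def by auto

lemma agree_trans: "agree n N c d \<Longrightarrow> agree n N d e \<Longrightarrow> agree n N c e"
  unfolding agree_def by auto

lemma agree_fmult:
  assumes "finite (fsupp c)" "finite (fsupp c')" "agree n N c c'" "agree n N d d'"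
  shows "agree n N (fmult c d) (fmult c' d')"
  unfolding agree_def
proof (intro allI ballI)
  fix \<mu> I assume I: "I \<in> regular n N"
  have "fmult c d \<mu> I = (\<Sum>\<nu>\<in>fsupp c \<union> fsupp c'. c \<nu> I * d (\<mu> - \<nu>) I)"
    using assms by (intro fmult_eq_sum) auto
  also have "\<dots> = (\<Sum>\<nu>\<in>fsupp c \<union> fsupp c'. c' \<nu> I * d' (\<mu> - \<nu>) I)"
    using assms(3,4) I by (intro sum.cong) (auto simp: agree_def)
  also have "\<dots> = fmult c' d' \<mu> I"
    using assms by (intro fmult_eq_sum[symmetric]) auto
  finally show "fmult c d \<mu> I = fmult c' d' \<mu> I" .
qed

lemma agree_dI:
  assumes "finite N" "agree n N c c'"
  shows "agree n N (dI i c) (dI i c')"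
  unfolding agree_def dI_def
proof (intro allI ballI)
  fix \<mu> I assume I: "I \<in> regular n N"
  have "eventually (\<lambda>z. c \<mu> (I(i := z)) = c' \<mu> (I(i := z))) (nhds (I i))"
    using eventually_upd_regular[OF assms(1) I, of i]
    by eventually_elim (use assms(2) in \<open>auto simp: agree_def\<close>)
  then show "deriv (\<lambda>z. c \<mu> (I(i := z))) (I i) = deriv (\<lambda>z. c' \<mu> (I(i := z))) (I i)"
    by (rule deriv_cong_ev) simp
qed

lemma agree_dphi: "agree n N c c' \<Longrightarrow> agree n N (dphi i c) (dphi i c')"
  unfolding agree_def dphi_def by auto

lemma agree_pbracket_left:
  assumes "finite N" "finite (fsupp F)" "finite (fsupp F')" "agree n N F F'"
  shows "agree n N (pbracket n F G) (pbracket n F' G)"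
proof -
  have "agree n N (fmult (dphi i F) (dI i G)) (fmult (dphi i F') (dI i G))" for i
    using assms by (intro agree_fmult finite_fsupp_dphi agree_dphi agree_refl)
  moreover have "agree n N (fmult (dI i F) (dphi i G)) (fmult (dI i F') (dphi i G))" for i
    using assms by (intro agree_fmult finite_fsupp_dI agree_dI agree_refl)
  ultimately show ?thesis
    unfolding agree_def pbracket_def fsub_def by simp
qed

lemma agree_adpow:
  assumes "finite N" "fourier_decay n N d F" "fourier_decay n N d' F'" "fourier_decay n N e ch"
    and "agree n N F F'"
  shows "agree n N (adpow n ch s F) (adpow n ch s F')"
proof (induction s)
  case (Suc s)
  show ?case
    using agree_pbracket_left[OF assms(1) _ _ Suc]
      fourier_decay_finite[OF fourier_decay_adpow[OF assms(1,2,4)]]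
      fourier_decay_finite[OF fourier_decay_adpow[OF assms(1,3,4)]] by simp
qed (use assms in simp)

lemma feval_agree:
  assumes "finite (fsupp c)" "finite (fsupp d)" "agree n N c d" "I \<in> regular n N"
  shows "feval n c I \<phi> = feval n d I \<phi>"
proof -
  have "feval n c I \<phi> = (\<Sum>\<mu>\<in>fsupp c \<union> fsupp d. c \<mu> I * exp (\<i> * mu_dot_phi n \<mu> \<phi>))"
    using assms by (intro feval_eq_sum) auto
  also have "\<dots> = (\<Sum>\<mu>\<in>fsupp c \<union> fsupp d. d \<mu> I * exp (\<i> * mu_dot_phi n \<mu> \<phi>))"
    using assms(3,4) by (intro sum.cong) (auto simp: agree_def)
  also have "\<dots> = feval n d I \<phi>"
    using assms by (intro feval_eq_sum[symmetric]) auto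
  finally show ?thesis .
qed

section \<open>Vanishing modes and independence of actions\<close>

definition vanishes :: "nat \<Rightarrow> (nat \<Rightarrow> int) set \<Rightarrow> ((nat \<Rightarrow> int) \<Rightarrow> bool) \<Rightarrow> fdata \<Rightarrow> bool" where
  "vanishes n N P c \<longleftrightarrow> (\<forall>\<mu>. P \<mu> \<longrightarrow> (\<forall>I\<in>regular n N. c \<mu> I = 0))"

definition low_mode :: "nat \<Rightarrow> (nat \<Rightarrow> int) \<Rightarrow> bool" where
  "low_mode t \<mu> \<longleftrightarrow> (\<exists>i. 1 \<le> i \<and> i \<le> t \<and> \<mu> i \<noteq> 0)"

definition action_indep :: "nat \<Rightarrow> (nat \<Rightarrow> int) set \<Rightarrow> nat \<Rightarrow> fdata \<Rightarrow> bool" where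
  "action_indep n N i c \<longleftrightarrow>
     (\<forall>\<mu> I z. I \<in> regular n N \<longrightarrow> I(i := z) \<in> regular n N \<longrightarrow> c \<mu> (I(i := z)) = c \<mu> I)"

lemma vanishesD: "vanishes n N P c \<Longrightarrow> P \<mu> \<Longrightarrow> I \<in> regular n N \<Longrightarrow> c \<mu> I = 0"
  unfolding vanishes_def by blast

lemma low_mode_mono: "low_mode t \<mu> \<Longrightarrow> t \<le> t' \<Longrightarrow> low_mode t' \<mu>"
  unfolding low_mode_def by auto

lemma vanishes_agree: "agree n N c c' \<Longrightarrow> vanishes n N P c \<Longrightarrow> vanishes n N P c'"
  unfolding agree_def vanishes_def by auto

lemma vanishes_mono: "vanishes n N P c \<Longrightarrow> (\<And>\<mu>. Q \<mu> \<Longrightarrow> P \<mu>) \<Longrightarrow> vanishes n N Q c"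
  unfolding vanishes_def by auto

lemma vanishes_low_mode_mono: "vanishes n N (low_mode t') c \<Longrightarrow> t \<le> t' \<Longrightarrow> vanishes n N (low_mode t) c"
  unfolding vanishes_def using low_mode_mono by blast

lemma vanishes_mono_modes: "vanishes n N P c \<Longrightarrow> N \<subseteq> N' \<Longrightarrow> vanishes n N' P c"
  unfolding vanishes_def using regular_antimono by blast

lemma vanishes_dphi: "vanishes n N P c \<Longrightarrow> vanishes n N P (dphi i c)"
  unfolding vanishes_def dphi_def by auto

lemma vanishes_fscale: "vanishes n N P c \<Longrightarrow> vanishes n N P (fscale a c)"
  unfolding vanishes_def fscale_def by auto

lemma vanishes_fadd: "vanishes n N P c \<Longrightarrow> vanishes n N P d \<Longrightarrow> vanishes n N P (fadd c d)"
  unfolding vanishes_def fadd_def by auto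

lemma vanishes_fsub: "vanishes n N P c \<Longrightarrow> vanishes n N P d \<Longrightarrow> vanishes n N P (fsub c d)"
  unfolding vanishes_def fsub_def by auto

lemma vanishes_sum:
  "(\<And>l. l \<in> A \<Longrightarrow> vanishes n N P (c l)) \<Longrightarrow> vanishes n N P (\<lambda>\<mu> I. \<Sum>l\<in>A. c l \<mu> I)"
  unfolding vanishes_def by auto

lemma deriv_eventually_const:
  assumes "eventually (\<lambda>z. f z = a) (nhds x)"
  shows "deriv f x = (0::complex)"
proof -
  have "deriv f x = deriv (\<lambda>z. a) x" by (rule deriv_cong_ev[OF assms refl])
  then show ?thesis by simp
qed

lemma vanishes_dI:
  assumes "finite N" "vanishes n N P c"
  shows "vanishes n N P (dI i c)"
  unfolding vanishes_def dI_def
proof (intro allI impI ballI)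
  fix \<mu> I assume P: "P \<mu>" and I: "I \<in> regular n N"
  have "eventually (\<lambda>z. c \<mu> (I(i := z)) = 0) (nhds (I i))"
    using eventually_upd_regular[OF assms(1) I, of i]
    by eventually_elim (use assms(2) P in \<open>auto simp: vanishes_def\<close>)
  then show "deriv (\<lambda>z. c \<mu> (I(i := z))) (I i) = 0" by (rule deriv_eventually_const)
qed

lemma vanishes_Qop: "vanishes n N (\<lambda>\<mu>. \<mu> k \<noteq> 0 \<and> P \<mu>) c \<Longrightarrow> vanishes n N P (Qop n k c)"
  unfolding vanishes_def Qop_def by auto

lemma vanishes_fmult_low:
  assumes "vanishes n N (low_mode t) c" "vanishes n N (low_mode t) d"
  shows "vanishes n N (low_mode t) (fmult c d)"
  unfolding vanishes_def fmult_def
proof (intro allI impI ballI sum.neutral)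
  fix \<mu> I \<nu> assume "low_mode t \<mu>" and I: "I \<in> regular n N"
  then obtain i where i: "1 \<le> i" "i \<le> t" "\<mu> i \<noteq> 0" unfolding low_mode_def by blast
  show "c \<nu> I * d (\<mu> - \<nu>) I = 0"
  proof (cases "\<nu> i = 0")
    case True
    with i have "low_mode t (\<mu> - \<nu>)" unfolding low_mode_def by (auto simp: fun_diff_def)
    then show ?thesis using vanishesD[OF assms(2) _ I] by simp
  next
    case False
    with i have "low_mode t \<nu>" unfolding low_mode_def by blast
    then show ?thesis using vanishesD[OF assms(1) _ I] by simp
  qed
qed

lemma vanishes_fmult_left: "vanishes n N (\<lambda>_. True) c \<Longrightarrow> vanishes n N P (fmult c d)"
  unfolding vanishes_def fmult_def by auto

lemma vanishes_fmult_right: "vanishes n N (\<lambda>_. True) d \<Longrightarrow> vanishes n N P (fmult c d)"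
  unfolding vanishes_def fmult_def by auto

lemma vanishes_pbracket_low:
  assumes "finite N" "vanishes n N (low_mode t) c" "vanishes n N (low_mode t) ch"
  shows "vanishes n N (low_mode t) (pbracket n c ch)"
  unfolding pbracket_def
  by (intro vanishes_sum vanishes_fsub vanishes_fmult_low vanishes_dphi vanishes_dI assms)

lemma action_indepD:
  "action_indep n N i c \<Longrightarrow> I \<in> regular n N \<Longrightarrow> I(i := z) \<in> regular n N \<Longrightarrow> c \<mu> (I(i := z)) = c \<mu> I"
  unfolding action_indep_def by blast

lemma action_indep_const: "(\<And>\<mu> I J. c \<mu> I = c \<mu> J) \<Longrightarrow> action_indep n N i c"
  unfolding action_indep_def by metis

lemma action_indep_mono_modes: "action_indep n N i c \<Longrightarrow> N \<subseteq> N' \<Longrightarrow> action_indep n N' i c"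
  unfolding action_indep_def using regular_antimono by blast

lemma action_indep_dphi: "action_indep n N i c \<Longrightarrow> action_indep n N i (dphi j c)"
  unfolding action_indep_def dphi_def by auto

lemma action_indep_fscale: "action_indep n N i c \<Longrightarrow> action_indep n N i (fscale a c)"
  unfolding action_indep_def fscale_def by auto

lemma action_indep_resp: "action_indep n N i c \<Longrightarrow> action_indep n N i (resp k c)"
  unfolding action_indep_def resp_def by auto

lemma action_indep_nresp: "action_indep n N i c \<Longrightarrow> action_indep n N i (nresp k c)"
  unfolding action_indep_def nresp_def by auto

lemma action_indep_fadd:
  "action_indep n N i c \<Longrightarrow> action_indep n N i d \<Longrightarrow> action_indep n N i (fadd c d)"
  unfolding action_indep_def fadd_def by auto

lemma action_indep_fsub:
  "action_indep n N i c \<Longrightarrow> action_indep n N i d \<Longrightarrow> action_indep n N i (fsub c d)"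
  unfolding action_indep_def fsub_def by auto

lemma action_indep_sum:
  "(\<And>l. l \<in> A \<Longrightarrow> action_indep n N i (c l)) \<Longrightarrow> action_indep n N i (\<lambda>\<mu> I. \<Sum>l\<in>A. c l \<mu> I)"
  unfolding action_indep_def by (auto intro!: sum.cong)

lemma action_indep_fmult:
  "action_indep n N i c \<Longrightarrow> action_indep n N i d \<Longrightarrow> action_indep n N i (fmult c d)"
  unfolding action_indep_def fmult_def by (auto intro!: sum.cong)

lemma dI_action_indep:
  assumes "finite N" "action_indep n N i c" "I \<in> regular n N"
  shows "dI i c \<mu> I = 0"
  unfolding dI_def
proof (rule deriv_eventually_const)
  show "eventually (\<lambda>z. c \<mu> (I(i := z)) = c \<mu> I) (nhds (I i))"
    using eventually_upd_regular[OF assms(1,3), of i]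
    by eventually_elim (use assms in \<open>auto simp: action_indep_def\<close>)
qed

lemma dI_const: "(\<And>\<mu> I J. c \<mu> I = c \<mu> J) \<Longrightarrow> dI i c \<mu> I = 0"
proof -
  assume "\<And>\<mu> I J. c \<mu> I = c \<mu> J"
  then have "(\<lambda>z. c \<mu> (I(i := z))) = (\<lambda>z. c \<mu> I)" by (simp add: fun_eq_iff)
  then show ?thesis unfolding dI_def by simp
qed

lemma action_indep_dI:
  assumes "finite N" "action_indep n N i c"
  shows "action_indep n N i (dI j c)"
  unfolding action_indep_def
proof (intro allI impI)
  fix \<mu> I z assume I: "I \<in> regular n N" and Iz: "I(i := z) \<in> regular n N"
  show "dI j c \<mu> (I(i := z)) = dI j c \<mu> I"
  proof (cases "j = i")
    case True
    then show ?thesis using dI_action_indep[OF assms I] dI_action_indep[OF assms Iz] by simp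
  next
    case False
    have "eventually (\<lambda>w. (I(i := z))(j := w) \<in> regular n N) (nhds (I j))"
      using eventually_upd_regular[OF assms(1) Iz, of j] False by simp
    with eventually_upd_regular[OF assms(1) I, of j]
    have "eventually (\<lambda>w. c \<mu> ((I(i := z))(j := w)) = c \<mu> (I(j := w))) (nhds (I j))"
    proof eventually_elim
      case (elim w)
      have "(I(i := z))(j := w) = (I(j := w))(i := z)" using False by (auto simp: fun_eq_iff)
      then show ?case using elim assms(2) unfolding action_indep_def by metis
    qed
    then have "deriv (\<lambda>w. c \<mu> ((I(i := z))(j := w))) (I j) = deriv (\<lambda>w. c \<mu> (I(j := w))) (I j)"
      by (rule deriv_cong_ev) simp
    then show ?thesis unfolding dI_def using False by simp
  qed
qed

lemma action_indep_Qop: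
  assumes "action_indep n N i c" "vanishes n N (\<lambda>\<mu>. \<mu> k \<noteq> 0 \<and> \<mu> i \<noteq> 0) c"
  shows "action_indep n N i (Qop n k c)"
  unfolding action_indep_def
proof (intro allI impI)
  fix \<mu> I z assume I: "I \<in> regular n N" and Iz: "I(i := z) \<in> regular n N"
  show "Qop n k c \<mu> (I(i := z)) = Qop n k c \<mu> I"
  proof (cases "\<mu> k \<noteq> 0 \<and> \<mu> i \<noteq> 0")
    case True
    then show ?thesis
      using vanishesD[OF assms(2) True I] vanishesD[OF assms(2) True Iz] unfolding Qop_def by simp
  next
    case False
    have "act_dot n (I(i := z)) \<mu> = act_dot n I \<mu>" if "\<mu> i = 0" using that by (simp add: act_dot_upd)
    then show ?thesis
      using False action_indepD[OF assms(1) I Iz] unfolding Qop_def act_dot_def[symmetric] by auto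
  qed
qed

lemma action_indep_pbracket:
  assumes "finite N" "action_indep n N i c" "action_indep n N i ch"
  shows "action_indep n N i (pbracket n c ch)"
  unfolding pbracket_def
  by (intro action_indep_sum action_indep_fsub action_indep_fmult action_indep_dphi action_indep_dI assms)

lemma action_indep_adpow:
  assumes "finite N" "action_indep n N i c" "action_indep n N i ch"
  shows "action_indep n N i (adpow n ch s c)"
  by (induction s) (auto intro: action_indep_pbracket assms)

section \<open>Algebra of the bracket\<close>

lemma dI_fadd:
  assumes "finite N" "fourier_decay n N d c" "fourier_decay n N d' c'" "I \<in> regular n N"
  shows "dI i (fadd c c') \<mu> I = dI i c \<mu> I + dI i c' \<mu> I"
proof -
  have "((\<lambda>z. c \<mu> (I(i := z)) + c' \<mu> (I(i := z))) has_field_derivative dI i c \<mu> I + dI i c' \<mu> I)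
      (at (I i))"
    by (intro DERIV_add fourier_decay_dI_has_derivative[OF assms(1,2,4)]
        fourier_decay_dI_has_derivative[OF assms(1,3,4)])
  then show ?thesis unfolding dI_def[of i "fadd c c'"] unfolding fadd_def by (rule DERIV_imp_deriv)
qed

lemma dI_cmult:
  assumes "finite N" "fourier_decay n N d c" "I \<in> regular n N"
  shows "dI i (\<lambda>\<mu> I. w \<mu> * c \<mu> I) \<mu> I = w \<mu> * dI i c \<mu> I"
proof -
  have "((\<lambda>z. w \<mu> * c \<mu> (I(i := z))) has_field_derivative w \<mu> * dI i c \<mu> I) (at (I i))"
    by (intro DERIV_cmult fourier_decay_dI_has_derivative[OF assms])
  then show ?thesis unfolding dI_def[of i "\<lambda>\<mu> I. w \<mu> * c \<mu> I"] by (rule DERIV_imp_deriv)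
qed

lemma fmult_fadd_left:
  assumes "finite (fsupp c)" "finite (fsupp c')"
  shows "fmult (fadd c c') d \<mu> I = fmult c d \<mu> I + fmult c' d \<mu> I"
proof -
  have "fmult (fadd c c') d \<mu> I = (\<Sum>\<nu>\<in>fsupp c \<union> fsupp c'. fadd c c' \<nu> I * d (\<mu> - \<nu>) I)"
    using assms fsupp_fadd by (intro fmult_eq_sum) auto
  also have "\<dots> = (\<Sum>\<nu>\<in>fsupp c \<union> fsupp c'. c \<nu> I * d (\<mu> - \<nu>) I) +
      (\<Sum>\<nu>\<in>fsupp c \<union> fsupp c'. c' \<nu> I * d (\<mu> - \<nu>) I)"
    unfolding fadd_def by (simp add: sum.distrib distrib_right)
  also have "\<dots> = fmult c d \<mu> I + fmult c' d \<mu> I"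
    using assms by (simp add: fmult_eq_sum[of "fsupp c \<union> fsupp c'" c] fmult_eq_sum[of "fsupp c \<union> fsupp c'" c'])
  finally show ?thesis .
qed

lemma pbracket_fadd_left:
  assumes "finite N" "fourier_decay n N d c" "fourier_decay n N d' c'"
  shows "agree n N (pbracket n (fadd c c') ch) (fadd (pbracket n c ch) (pbracket n c' ch))"
  unfolding agree_def
proof (intro allI ballI)
  fix \<mu> I assume I: "I \<in> regular n N"
  have fin: "finite (fsupp c)" "finite (fsupp c')" using assms fourier_decay_finite by blast+
  have "fmult (dphi i (fadd c c')) (dI i ch) \<mu> I = fmult (dphi i c) (dI i ch) \<mu> I + fmult (dphi i c') (dI i ch) \<mu> I"
    for i
  proof -
    have "dphi i (fadd c c') = fadd (dphi i c) (dphi i c')"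
      unfolding dphi_def fadd_def by (simp add: fun_eq_iff distrib_left)
    then show ?thesis using fin by (simp add: fmult_fadd_left finite_fsupp_dphi)
  qed
  moreover have "fmult (dI i (fadd c c')) (dphi i ch) \<mu> I = fmult (dI i c) (dphi i ch) \<mu> I + fmult (dI i c') (dphi i ch) \<mu> I"
    for i
  proof -
    have "agree n N (dI i (fadd c c')) (fadd (dI i c) (dI i c'))"
      unfolding agree_def using dI_fadd[OF assms] by (simp add: fadd_def)
    then have "fmult (dI i (fadd c c')) (dphi i ch) \<mu> I = fmult (fadd (dI i c) (dI i c')) (dphi i ch) \<mu> I"
      using fin by (intro agreeD[OF agree_fmult I] finite_fsupp_dI finite_fsupp_fadd agree_refl)
    then show ?thesis using fin by (simp add: fmult_fadd_left finite_fsupp_dI)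
  qed
  ultimately show "pbracket n (fadd c c') ch \<mu> I = fadd (pbracket n c ch) (pbracket n c' ch) \<mu> I"
    unfolding pbracket_def fadd_def[of "\<lambda>\<mu> I. \<Sum>i = 1..n. _ i \<mu> I"] fsub_def
    by (simp add: sum.distrib[symmetric] algebra_simps)
qed

lemma fmult_dphi_shift:
  assumes "finite (fsupp X)" "vanishes n N (\<lambda>\<mu>. \<mu> a \<noteq> 0) Y" "I \<in> regular n N"
  shows "\<i> * of_int (\<mu> a) * fmult X Y \<mu> I = fmult (dphi a X) Y \<mu> I"
proof -
  have "\<i> * of_int (\<mu> a) * fmult X Y \<mu> I = (\<Sum>\<nu>\<in>fsupp X. \<i> * of_int (\<mu> a) * (X \<nu> I * Y (\<mu> - \<nu>) I))"
    using assms by (simp add: fmult_eq_sum sum_distrib_left)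
  also have "\<dots> = (\<Sum>\<nu>\<in>fsupp X. dphi a X \<nu> I * Y (\<mu> - \<nu>) I)"
  proof (intro sum.cong refl)
    fix \<nu>
    show "\<i> * of_int (\<mu> a) * (X \<nu> I * Y (\<mu> - \<nu>) I) = dphi a X \<nu> I * Y (\<mu> - \<nu>) I"
    proof (cases "(\<mu> - \<nu>) a = 0")
      case True
      then show ?thesis unfolding dphi_def by (simp add: fun_diff_def)
    next
      case False
      then show ?thesis using vanishesD[OF assms(2) _ assms(3)] by simp
    qed
  qed
  also have "\<dots> = fmult (dphi a X) Y \<mu> I"
    using assms(1) fsupp_dphi by (intro fmult_eq_sum[symmetric]) auto
  finally show ?thesis .
qed

lemma dphi_pbracket:
  assumes "finite N" "fourier_decay n N d G" "vanishes n N (\<lambda>\<mu>. \<mu> a \<noteq> 0) ch"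
  shows "agree n N (dphi a (pbracket n G ch)) (pbracket n (dphi a G) ch)"
  unfolding agree_def
proof (intro allI ballI)
  fix \<mu> I assume I: "I \<in> regular n N"
  have fG: "finite (fsupp G)" using fourier_decay_finite[OF assms(2)] .
  have "\<i> * of_int (\<mu> a) * fmult (dphi i G) (dI i ch) \<mu> I = fmult (dphi i (dphi a G)) (dI i ch) \<mu> I"
    for i
  proof -
    have "dphi a (dphi i G) = dphi i (dphi a G)" unfolding dphi_def by (simp add: fun_eq_iff ac_simps)
    then show ?thesis
      using fmult_dphi_shift[OF finite_fsupp_dphi[OF fG] vanishes_dI[OF assms(1,3)] I] by simp
  qed
  moreover have "\<i> * of_int (\<mu> a) * fmult (dI i G) (dphi i ch) \<mu> I = fmult (dI i (dphi a G)) (dphi i ch) \<mu> I"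
    for i
  proof -
    have "agree n N (dphi a (dI i G)) (dI i (dphi a G))"
      unfolding agree_def dphi_def using dI_cmult[OF assms(1,2), of _ i "\<lambda>\<mu>. \<i> * of_int (\<mu> a)"]
      by simp
    then have "fmult (dphi a (dI i G)) (dphi i ch) \<mu> I = fmult (dI i (dphi a G)) (dphi i ch) \<mu> I"
      using fG by (intro agreeD[OF agree_fmult I] finite_fsupp_dphi finite_fsupp_dI agree_refl)
    then show ?thesis
      using fmult_dphi_shift[OF finite_fsupp_dI[OF fG] vanishes_dphi[OF assms(3)] I] by simp
  qed
  ultimately show "dphi a (pbracket n G ch) \<mu> I = pbracket n (dphi a G) ch \<mu> I"
    unfolding pbracket_def dphi_def[of a "\<lambda>\<mu> I. \<Sum>i = 1..n. _ i \<mu> I"] fsub_def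
    by (simp add: sum_distrib_left right_diff_distrib)
qed

lemma dphi_adpow:
  assumes "finite N" "fourier_decay n N d G" "fourier_decay n N e ch"
    and "vanishes n N (\<lambda>\<mu>. \<mu> a \<noteq> 0) ch"
  shows "agree n N (dphi a (adpow n ch s G)) (adpow n ch s (dphi a G))"
proof (induction s)
  case (Suc s)
  have decay: "fourier_decay n N (d + s * Suc e) (adpow n ch s G)"
    by (rule fourier_decay_adpow[OF assms(1-3)])
  have "agree n N (pbracket n (dphi a (adpow n ch s G)) ch) (pbracket n (adpow n ch s (dphi a G)) ch)"
    using decay fourier_decay_adpow[OF assms(1) fourier_decay_dphi[OF assms(2)] assms(3)]
    by (intro agree_pbracket_left[OF assms(1) _ _ Suc] fourier_decay_finite fourier_decay_dphi)
  with dphi_pbracket[OF assms(1) decay assms(4)] show ?case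
    by (simp add: agree_trans[of n N])
qed (simp add: agree_refl)

lemma feval_fadd:
  assumes "finite (fsupp c)" "finite (fsupp d)"
  shows "feval n (fadd c d) I \<phi> = feval n c I \<phi> + feval n d I \<phi>"
proof -
  have "feval n (fadd c d) I \<phi> = (\<Sum>\<mu>\<in>fsupp c \<union> fsupp d. fadd c d \<mu> I * exp (\<i> * mu_dot_phi n \<mu> \<phi>))"
    using assms fsupp_fadd by (intro feval_eq_sum) auto
  also have "\<dots> = (\<Sum>\<mu>\<in>fsupp c \<union> fsupp d. c \<mu> I * exp (\<i> * mu_dot_phi n \<mu> \<phi>)) +
      (\<Sum>\<mu>\<in>fsupp c \<union> fsupp d. d \<mu> I * exp (\<i> * mu_dot_phi n \<mu> \<phi>))"
    unfolding fadd_def by (simp add: sum.distrib distrib_right)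
  also have "\<dots> = feval n c I \<phi> + feval n d I \<phi>"
    using assms by (simp add: feval_eq_sum[of "fsupp c \<union> fsupp d" c] feval_eq_sum[of "fsupp c \<union> fsupp d" d])
  finally show ?thesis .
qed

lemma feval_fscale:
  assumes "finite (fsupp c)"
  shows "feval n (fscale a c) I \<phi> = a * feval n c I \<phi>"
proof -
  have "feval n (fscale a c) I \<phi> = (\<Sum>\<mu>\<in>fsupp c. fscale a c \<mu> I * exp (\<i> * mu_dot_phi n \<mu> \<phi>))"
    using assms fsupp_fscale by (intro feval_eq_sum) auto
  then show ?thesis
    unfolding feval_def fscale_def by (simp add: sum_distrib_left mult.assoc)
qed

lemma mu_dot_phi_add: "mu_dot_phi n (\<lambda>l. a l + b l) \<phi> = mu_dot_phi n a \<phi> + mu_dot_phi n b \<phi>"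
  unfolding mu_dot_phi_def by (simp add: sum.distrib distrib_right)

lemma feval_translate:
  assumes "finite T" "(\<lambda>\<rho> l. \<nu> l + \<rho> l) ` fsupp d \<subseteq> T"
  shows "(\<Sum>\<mu>\<in>T. d (\<mu> - \<nu>) I * exp (\<i> * mu_dot_phi n \<mu> \<phi>)) =
    exp (\<i> * mu_dot_phi n \<nu> \<phi>) * feval n d I \<phi>"
proof -
  define E where "E \<mu> = exp (\<i> * mu_dot_phi n \<mu> \<phi>)" for \<mu>
  define sh where "sh \<rho> = (\<lambda>l. \<nu> l + \<rho> l)" for \<rho> :: "nat \<Rightarrow> int"
  have inj: "inj_on sh (fsupp d)" unfolding sh_def inj_on_def by (auto simp: fun_eq_iff)
  have "(\<Sum>\<mu>\<in>T. d (\<mu> - \<nu>) I * E \<mu>) = (\<Sum>\<mu>\<in>sh ` fsupp d. d (\<mu> - \<nu>) I * E \<mu>)"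
  proof (rule sum.mono_neutral_right[OF assms(1)])
    show "sh ` fsupp d \<subseteq> T" unfolding sh_def using assms(2) .
    show "\<forall>\<mu>\<in>T - sh ` fsupp d. d (\<mu> - \<nu>) I * E \<mu> = 0"
    proof
      fix \<mu> assume "\<mu> \<in> T - sh ` fsupp d"
      then have "\<mu> - \<nu> \<notin> fsupp d" unfolding sh_def by (auto simp: image_iff fun_eq_iff fun_diff_def)
      then show "d (\<mu> - \<nu>) I * E \<mu> = 0" by (simp add: not_in_fsupp)
    qed
  qed
  also have "\<dots> = (\<Sum>\<rho>\<in>fsupp d. d (sh \<rho> - \<nu>) I * E (sh \<rho>))"
    by (rule sum.reindex[OF inj, unfolded comp_def])
  also have "\<dots> = (\<Sum>\<rho>\<in>fsupp d. E \<nu> * (d \<rho> I * E \<rho>))"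
  proof (intro sum.cong refl)
    fix \<rho>
    have "sh \<rho> - \<nu> = \<rho>" unfolding sh_def by (simp add: fun_eq_iff fun_diff_def)
    moreover have "E (sh \<rho>) = E \<nu> * E \<rho>"
      unfolding E_def sh_def mu_dot_phi_add by (simp add: distrib_left exp_add)
    ultimately show "d (sh \<rho> - \<nu>) I * E (sh \<rho>) = E \<nu> * (d \<rho> I * E \<rho>)" by simp
  qed
  also have "\<dots> = E \<nu> * feval n d I \<phi>" unfolding feval_def E_def by (simp add: sum_distrib_left)
  finally show ?thesis unfolding E_def .
qed

lemma feval_fmult:
  assumes fc: "finite (fsupp c)" and fd: "finite (fsupp d)"
  shows "feval n (fmult c d) I \<phi> = feval n c I \<phi> * feval n d I \<phi>"
proof -
  define T where "T = (\<lambda>(a, b) l. a l + b l) ` (fsupp c \<times> fsupp d)"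
  have fT: "finite T" unfolding T_def using fc fd by auto
  define E where "E \<mu> = exp (\<i> * mu_dot_phi n \<mu> \<phi>)" for \<mu>
  have "feval n (fmult c d) I \<phi> = (\<Sum>\<mu>\<in>T. fmult c d \<mu> I * E \<mu>)"
    unfolding E_def T_def using fsupp_fmult fT by (intro feval_eq_sum) (auto simp: T_def)
  also have "\<dots> = (\<Sum>\<nu>\<in>fsupp c. \<Sum>\<mu>\<in>T. c \<nu> I * (d (\<mu> - \<nu>) I * E \<mu>))"
    unfolding fmult_def sum_distrib_right by (subst sum.swap) (simp add: mult.assoc)
  also have "\<dots> = (\<Sum>\<nu>\<in>fsupp c. c \<nu> I * (E \<nu> * feval n d I \<phi>))"
    unfolding sum_distrib_left[symmetric] E_def using fT
    by (intro sum.cong refl arg_cong[where f = "\<lambda>x. c _ I * x"] feval_translate) (auto simp: T_def)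
  also have "\<dots> = feval n c I \<phi> * feval n d I \<phi>"
    unfolding feval_def E_def by (simp add: sum_distrib_right mult.assoc)
  finally show ?thesis .
qed

section \<open>The unperturbed term \<open>f\<^sup>(\<^sup>0\<^sup>)\<close>\<close>

definition finite_potentials :: "nat \<Rightarrow> (nat \<Rightarrow> int \<Rightarrow> complex) \<Rightarrow> bool" where
  "finite_potentials n u \<longleftrightarrow> (\<forall>i\<in>{1..n-1}. finite {m. u i m \<noteq> 0} \<and> u i 0 = 0)"

text \<open>The wave vector of \<open>e\<^sup>i\<^sup>m\<^sup>(\<^sup>\<phi>\<^sub>i\<^sub>+\<^sub>1\<^sup>-\<^sup>\<phi>\<^sub>i\<^sup>)\<close>.\<close>
definition pair_mode :: "nat \<Rightarrow> int \<Rightarrow> nat \<Rightarrow> int" where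
  "pair_mode i m = (\<lambda>l. if l = i + 1 then m else if l = i then - m else 0)"

lemma f0data_eq:
  "f0data n u \<mu> I = (\<Sum>i=1..n-1. \<Sum>m\<in>{m. u i m \<noteq> 0}. if \<mu> = pair_mode i m then u i m else 0)"
  unfolding f0data_def pair_mode_def by simp

lemma f0data_const: "f0data n u \<mu> I = f0data n u \<mu> J"
  unfolding f0data_def by simp

lemma f0data_nonzero:
  assumes "finite_potentials n u" "f0data n u \<mu> I \<noteq> 0"
  obtains i m where "i \<in> {1..n-1}" "u i m \<noteq> 0" "m \<noteq> 0" "\<mu> = pair_mode i m"
proof -
  from assms(2) obtain i where i: "i \<in> {1..n-1}"
    and "(\<Sum>m\<in>{m. u i m \<noteq> 0}. if \<mu> = pair_mode i m then u i m else 0) \<noteq> 0"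
    unfolding f0data_eq by (rule sum.not_neutral_contains_not_neutral)
  then obtain m where m: "u i m \<noteq> 0" "\<mu> = pair_mode i m"
    by (auto elim: sum.not_neutral_contains_not_neutral split: if_splits)
  moreover have "m \<noteq> 0" using m i assms(1) unfolding finite_potentials_def by auto
  ultimately show ?thesis using i that by blast
qed

lemma f0data_mode_far:
  assumes "finite_potentials n u" "f0data n u \<mu> I \<noteq> 0" "\<mu> a \<noteq> 0" "a + 2 \<le> b"
  shows "\<mu> b = 0"
proof -
  obtain i m where "\<mu> = pair_mode i m" using f0data_nonzero[OF assms(1,2)] by blast
  with assms(3,4) show ?thesis by (auto simp: pair_mode_def split: if_splits)
qed

lemma finite_fsupp_f0data:
  assumes "finite_potentials n u"
  shows "finite (fsupp (f0data n u))"
proof (rule finite_subset)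
  show "fsupp (f0data n u) \<subseteq> (\<Union>i\<in>{1..n-1}. pair_mode i ` {m. u i m \<noteq> 0})"
    by (rule fsupp_subsetI) (erule f0data_nonzero[OF assms], blast)
  show "finite (\<Union>i\<in>{1..n-1}. pair_mode i ` {m. u i m \<noteq> 0})"
    using assms unfolding finite_potentials_def by auto
qed

lemma fourier_decay_const:
  assumes "finite (fsupp c)" "\<And>\<mu> I J. c \<mu> I = c \<mu> J"
  shows "fourier_decay n N 0 c"
  unfolding fourier_decay_def
  using assms by (auto intro!: exI[of _ "\<lambda>I. c _ (\<lambda>_. 0)"] rat_decay.const)

lemma fourier_decay_f0data: "finite_potentials n u \<Longrightarrow> fourier_decay n N 0 (f0data n u)"
  by (intro fourier_decay_const finite_fsupp_f0data f0data_const)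

lemma f0data_vanishes_nonres_low:
  assumes "finite_potentials n u"
  shows "vanishes n N (\<lambda>\<mu>. \<mu> k \<noteq> 0 \<and> low_mode (k - 2) \<mu>) (f0data n u)"
  unfolding vanishes_def low_mode_def using f0data_mode_far[OF assms] by fastforce

lemma dphi_f0data_vanishes_low:
  assumes "finite_potentials n u"
  shows "vanishes n N (low_mode (i - 2)) (dphi i (f0data n u))"
  unfolding vanishes_def low_mode_def dphi_def using f0data_mode_far[OF assms] by fastforce

lemma mu_dot_phi_pair_mode:
  assumes "a \<in> {1..n-1}"
  shows "mu_dot_phi n (pair_mode a m) \<phi> = of_int m * (\<phi> (a+1) - \<phi> a)"
proof -
  have "mu_dot_phi n (pair_mode a m) \<phi> =
      (\<Sum>l=1..n. (if l = a + 1 then of_int m * \<phi> (a+1) else 0) + (if l = a then - of_int m * \<phi> a else 0))"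
    unfolding mu_dot_phi_def pair_mode_def by (intro sum.cong refl) auto
  also have "\<dots> = of_int m * \<phi> (a+1) - of_int m * \<phi> a"
  proof -
    have "a + 1 \<in> {1..n}" "a \<in> {1..n}" using assms by auto
    then show ?thesis by (simp add: sum.distrib)
  qed
  finally show ?thesis by (simp add: algebra_simps)
qed

lemma dphi_dphi_f0data:
  assumes "a \<in> {1..n-1}"
  shows "dphi (a + 1) (dphi a (f0data n u)) \<mu> I =
    (\<Sum>m\<in>{m. u a m \<noteq> 0}. if \<mu> = pair_mode a m then (of_int m)^2 * u a m else 0)"
proof -
  define c where "c \<nu> = \<i> * of_int (\<nu> (a+1)) * (\<i> * of_int (\<nu> a))" for \<nu> :: "nat \<Rightarrow> int"
  have c: "c (pair_mode i m) = (if i = a then (of_int m)^2 else 0)" for i m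
    unfolding c_def pair_mode_def by (auto simp: power2_eq_square algebra_simps)
  have "dphi (a + 1) (dphi a (f0data n u)) \<mu> I = c \<mu> * f0data n u \<mu> I"
    unfolding dphi_def c_def by (simp add: mult.assoc)
  also have "\<dots> = (\<Sum>i=1..n-1. \<Sum>m\<in>{m. u i m \<noteq> 0}.
      if \<mu> = pair_mode i m then (if i = a then (of_int m)^2 else 0) * u i m else 0)"
    unfolding f0data_eq sum_distrib_left
    by (intro sum.cong refl, rename_tac i m, case_tac "\<mu> = pair_mode i m") (simp_all add: c)
  also have "\<dots> = (\<Sum>i=1..n-1. if i = a then
      (\<Sum>m\<in>{m. u a m \<noteq> 0}. if \<mu> = pair_mode a m then (of_int m)^2 * u a m else 0) else 0)"
    by (intro sum.cong refl) (auto cong: if_cong)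
  finally show ?thesis using assms by simp
qed

lemma feval_dphi_dphi_f0data:
  assumes "finite_potentials n u" "a \<in> {1..n-1}"
  shows "feval n (dphi (a + 1) (dphi a (f0data n u))) I \<phi> = - Upot'' u a (\<phi> (a+1) - \<phi> a)"
proof -
  define M where "M = {m. u a m \<noteq> 0}"
  have fM: "finite M" using assms unfolding finite_potentials_def M_def by auto
  define P where "P = dphi (a + 1) (dphi a (f0data n u))"
  have P: "P \<mu> I = (\<Sum>m\<in>M. if \<mu> = pair_mode a m then (of_int m)^2 * u a m else 0)" for \<mu> I
    unfolding P_def M_def by (rule dphi_dphi_f0data[OF assms(2)])
  have inj: "inj_on (pair_mode a) M"
    unfolding inj_on_def pair_mode_def by (auto simp: fun_eq_iff dest: spec[of _ "a+1"])
  have "fsupp P \<subseteq> pair_mode a ` M"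
  proof (rule fsupp_subsetI)
    fix \<mu> I assume "P \<mu> I \<noteq> 0"
    then obtain m where "m \<in> M" "(if \<mu> = pair_mode a m then (of_int m)^2 * u a m else 0) \<noteq> 0"
      unfolding P by (rule sum.not_neutral_contains_not_neutral)
    then show "\<mu> \<in> pair_mode a ` M" by (auto split: if_splits)
  qed
  then have "feval n P I \<phi> = (\<Sum>\<mu>\<in>pair_mode a ` M. P \<mu> I * exp (\<i> * mu_dot_phi n \<mu> \<phi>))"
    using fM by (intro feval_eq_sum) auto
  also have "\<dots> = (\<Sum>m\<in>M. P (pair_mode a m) I * exp (\<i> * mu_dot_phi n (pair_mode a m) \<phi>))"
    by (rule sum.reindex[OF inj, unfolded comp_def])
  also have "\<dots> = (\<Sum>m\<in>M. (of_int m)^2 * u a m * exp (\<i> * (of_int m * (\<phi> (a+1) - \<phi> a))))"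
  proof (intro sum.cong refl)
    fix m assume m: "m \<in> M"
    have "P (pair_mode a m) I = (\<Sum>m'\<in>M. if m' = m then (of_int m')^2 * u a m' else 0)"
      unfolding P using inj m by (intro sum.cong refl) (auto simp: inj_on_def)
    also have "\<dots> = (of_int m)^2 * u a m" using m fM by simp
    finally show "P (pair_mode a m) I * exp (\<i> * mu_dot_phi n (pair_mode a m) \<phi>) =
        (of_int m)^2 * u a m * exp (\<i> * (of_int m * (\<phi> (a+1) - \<phi> a)))"
      using mu_dot_phi_pair_mode[OF assms(2)] by simp
  qed
  also have "\<dots> = - Upot'' u a (\<phi> (a+1) - \<phi> a)"
    unfolding Upot''_def M_def[symmetric]
    by (simp add: sum_negf[symmetric] power_mult_distrib mult.assoc)
  finally show ?thesis unfolding P_def .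
qed

text \<open>If the coefficients do not depend on \<open>I\<^sub>b\<close>, differentiating \<open>-\<i> c\<^sub>\<mu> / (I\<cdot>\<mu>)\<close> in \<open>I\<^sub>b\<close>
  gives \<open>\<i> \<mu>\<^sub>b c\<^sub>\<mu> / (I\<cdot>\<mu>)\<^sup>2\<close>, which is \<open>-Q(Q(\<partial>\<^sub>\<phi>\<^sub>b c))\<close>.\<close>
lemma dI_Qop:
  assumes fN: "finite N" and I: "I \<in> regular n N" and b: "b \<in> {1..n}"
    and indep: "action_indep n N b c" and nonres: "\<forall>\<mu>\<in>fsupp c. \<mu> k \<noteq> 0 \<longrightarrow> \<mu> \<in> N"
  shows "dI b (Qop n k c) \<mu> I = - Qop n k (Qop n k (dphi b c)) \<mu> I"
proof (cases "\<mu> k \<noteq> 0 \<and> \<mu> \<in> fsupp c")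
  case False
  then have "Qop n k c \<mu> = (\<lambda>_. 0)"
    unfolding Qop_def by (auto simp: fun_eq_iff not_in_fsupp)
  with False show ?thesis unfolding Qop_def dphi_def dI_def by (auto simp: not_in_fsupp)
next
  case True
  then have "\<mu> \<in> N" and mk: "\<mu> k \<noteq> 0" using nonres by auto
  then have D: "act_dot n I \<mu> \<noteq> 0" using I unfolding regular_def by auto
  have "eventually (\<lambda>z. Qop n k c \<mu> (I(b := z)) = - \<i> * c \<mu> I * inverse (act_dot n (I(b := z)) \<mu>))
      (nhds (I b))"
    using eventually_upd_regular[OF fN I, of b]
  proof eventually_elim
    case (elim z)
    then have "c \<mu> (I(b := z)) = c \<mu> I" using action_indepD[OF indep I] by blast
    then show ?case using mk unfolding Qop_def act_dot_def by (simp add: divide_inverse)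
  qed
  moreover have "((\<lambda>z. - \<i> * c \<mu> I * inverse (act_dot n (I(b := z)) \<mu>)) has_field_derivative
      - \<i> * c \<mu> I * - (of_int (\<mu> b) * inverse (act_dot n I \<mu> ^ 2))) (at (I b))"
    using inverse_act_dot_has_derivative[OF D, of b] b by (intro DERIV_cmult) simp
  ultimately have "dI b (Qop n k c) \<mu> I = - \<i> * c \<mu> I * - (of_int (\<mu> b) * inverse (act_dot n I \<mu> ^ 2))"
    unfolding dI_def by (simp add: DERIV_imp_deriv DERIV_cong_ev)
  also have "\<dots> = - Qop n k (Qop n k (dphi b c)) \<mu> I"
    using mk D unfolding Qop_def dphi_def act_dot_def[symmetric] by (simp add: field_simps power2_eq_square)
  finally show ?thesis .
qed

section \<open>Structure of the sequence \<open>f\<^sup>(\<^sup>m\<^sup>)\<close>\<close>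

definition bracket_arg :: "nat \<Rightarrow> nat \<Rightarrow> (nat \<Rightarrow> int \<Rightarrow> complex) \<Rightarrow> nat \<Rightarrow> nat \<Rightarrow> fdata" where
  "bracket_arg n k u m l = fadd (\<lambda>\<nu> J. \<Sum>m'<m. resp k (fseq n k u m') \<nu> J)
     (fsub (fseq n k u m) (fscale (1 / of_nat (l + 1)) (nresp k (fseq n k u m))))"

lemma fseq_Suc_bracket_arg:
  "fseq n k u (Suc m) = (\<lambda>\<mu> I. \<Sum>l=1..k-1.
     fscale (1 / of_nat (fact l)) (adpow n (Qop n k (fseq n k u m)) l (bracket_arg n k u m l)) \<mu> I)"
  unfolding bracket_arg_def by simp

definition fseq_props :: "nat \<Rightarrow> nat \<Rightarrow> (nat \<Rightarrow> int \<Rightarrow> complex) \<Rightarrow> (nat \<Rightarrow> int) set \<Rightarrow> nat \<Rightarrow> bool" where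
  "fseq_props n k u N m \<longleftrightarrow> fourier_decay n N (2 * m) (fseq n k u m) \<and>
     (\<forall>\<mu>\<in>fsupp (fseq n k u m). \<mu> k \<noteq> 0 \<longrightarrow> \<mu> \<in> N) \<and>
     vanishes n N (\<lambda>\<mu>. \<mu> k \<noteq> 0 \<and> low_mode (k - m - 2) \<mu>) (fseq n k u m) \<and>
     (1 \<le> m \<longrightarrow> vanishes n N (low_mode (k - m - 2)) (fseq n k u m)) \<and>
     (\<forall>i. 1 \<le> i \<and> i \<le> k - m - 1 \<longrightarrow> action_indep n N i (fseq n k u m))"

definition fseq_props_upto :: "nat \<Rightarrow> nat \<Rightarrow> (nat \<Rightarrow> int \<Rightarrow> complex) \<Rightarrow> (nat \<Rightarrow> int) set \<Rightarrow> nat \<Rightarrow> bool" where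
  "fseq_props_upto n k u N m \<longleftrightarrow> nonres_modes k N \<and> (\<forall>m'\<le>m. fseq_props n k u N m')"

lemma fseq_props_mono_modes:
  "fseq_props n k u N m \<Longrightarrow> N \<subseteq> N' \<Longrightarrow> fseq_props n k u N' m"
  unfolding fseq_props_def
  by (auto intro: fourier_decay_mono vanishes_mono_modes action_indep_mono_modes)

lemma fseq_props_upto_0:
  assumes "finite_potentials n u"
  shows "fseq_props_upto n k u {\<mu>\<in>fsupp (f0data n u). \<mu> k \<noteq> 0} 0"
  unfolding fseq_props_upto_def fseq_props_def nonres_modes_def
  using finite_fsupp_f0data[OF assms] fourier_decay_f0data[OF assms]
    f0data_vanishes_nonres_low[OF assms]
  by (auto intro: action_indep_const f0data_const)

lemma fseq_props_Qop:
  assumes "fseq_props n k u N m"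
  shows "fourier_decay n N (Suc (2 * m)) (Qop n k (fseq n k u m))"
    and "vanishes n N (low_mode (k - m - 2)) (Qop n k (fseq n k u m))"
    and "\<And>i. 1 \<le> i \<Longrightarrow> i \<le> k - m - 2 \<Longrightarrow> action_indep n N i (Qop n k (fseq n k u m))"
proof -
  show "fourier_decay n N (Suc (2 * m)) (Qop n k (fseq n k u m))"
    using assms unfolding fseq_props_def by (auto intro: fourier_decay_Qop)
  have low: "vanishes n N (\<lambda>\<mu>. \<mu> k \<noteq> 0 \<and> low_mode (k - m - 2) \<mu>) (fseq n k u m)"
    using assms unfolding fseq_props_def by blast
  then show "vanishes n N (low_mode (k - m - 2)) (Qop n k (fseq n k u m))"
    by (rule vanishes_Qop)
  fix i assume i: "1 \<le> i" "i \<le> k - m - 2"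
  show "action_indep n N i (Qop n k (fseq n k u m))"
  proof (rule action_indep_Qop)
    show "action_indep n N i (fseq n k u m)" using assms i unfolding fseq_props_def by auto
    show "vanishes n N (\<lambda>\<mu>. \<mu> k \<noteq> 0 \<and> \<mu> i \<noteq> 0) (fseq n k u m)"
      using low by (rule vanishes_mono) (use i in \<open>auto simp: low_mode_def\<close>)
  qed
qed

lemma fourier_decay_bracket_arg:
  assumes "fseq_props_upto n k u N m"
  shows "fourier_decay n N 0 (bracket_arg n k u m l)"
proof -
  have "fourier_decay n N 0 (fseq n k u m')" if "m' \<le> m" for m'
    using assms that unfolding fseq_props_upto_def fseq_props_def by (auto intro: fourier_decay_weaken)
  then show ?thesis
    unfolding bracket_arg_def
    by (intro fourier_decay_fadd fourier_decay_fsub fourier_decay_sum fourier_decay_fscale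
        fourier_decay_nresp fourier_decay_resp) auto
qed

lemma action_indep_bracket_arg:
  assumes "fseq_props_upto n k u N m" "1 \<le> i" "i \<le> k - m - 2"
  shows "action_indep n N i (bracket_arg n k u m l)"
proof -
  have "action_indep n N i (fseq n k u m')" if "m' \<le> m" for m'
    using assms that unfolding fseq_props_upto_def fseq_props_def by auto
  then show ?thesis
    unfolding bracket_arg_def
    by (intro action_indep_fadd action_indep_fsub action_indep_sum action_indep_fscale
        action_indep_nresp action_indep_resp) auto
qed

lemma bracket_arg_low_mode:
  assumes props: "fseq_props_upto n k u N m" and low: "low_mode (k - m - 2) \<nu>"
    and J: "J \<in> regular n N"
  shows "bracket_arg n k u m l \<nu> J = resp k (f0data n u) \<nu> J"
proof (cases "m = 0")
  case True
  have "vanishes n N (\<lambda>\<mu>. \<mu> k \<noteq> 0 \<and> low_mode (k - m - 2) \<mu>) (fseq n k u m)"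
    using props unfolding fseq_props_upto_def fseq_props_def by auto
  then have "fseq n k u 0 \<nu> J = 0" if "\<nu> k \<noteq> 0"
    using True low that J by (auto dest: vanishesD)
  with True show ?thesis
    unfolding bracket_arg_def fsub_def fadd_def fscale_def nresp_def resp_def by auto
next
  case False
  have zero: "fseq n k u m' \<nu> J = 0" if "1 \<le> m'" "m' \<le> m" for m'
  proof -
    have "vanishes n N (low_mode (k - m' - 2)) (fseq n k u m')"
      using props that unfolding fseq_props_upto_def fseq_props_def by auto
    moreover have "low_mode (k - m' - 2) \<nu>" using low by (rule low_mode_mono) (use that in auto)
    ultimately show ?thesis using J by (simp add: vanishesD)
  qed
  have "(\<Sum>m'<m. resp k (fseq n k u m') \<nu> J) =
      resp k (fseq n k u 0) \<nu> J + (\<Sum>m'\<in>{..<m} - {0}. resp k (fseq n k u m') \<nu> J)"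
    using False by (simp add: sum.remove)
  also have "(\<Sum>m'\<in>{..<m} - {0}. resp k (fseq n k u m') \<nu> J) = 0"
    using zero by (intro sum.neutral) (auto simp: resp_def)
  finally show ?thesis
    using zero[of m] False unfolding bracket_arg_def fsub_def fadd_def fscale_def nresp_def by simp
qed

text \<open>\<open>f\<^sup>(\<^sup>0\<^sup>)\<close> only couples neighbouring angles, and \<open>\<chi>\<close> does not depend on the first actions.\<close>
lemma vanishes_pbracket_resonant_f0data:
  assumes fN: "finite N" and u: "finite_potentials n u"
    and ch_low: "vanishes n N (low_mode s) ch"
    and ch_indep: "\<And>i. 1 \<le> i \<Longrightarrow> i \<le> s \<Longrightarrow> action_indep n N i ch"
  shows "vanishes n N (low_mode (s - 1)) (pbracket n (resp k (f0data n u)) ch)"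
  unfolding pbracket_def
proof (intro vanishes_sum vanishes_fsub)
  fix i assume i: "i \<in> {1..n}"
  have R0: "resp k (f0data n u) \<mu> I = resp k (f0data n u) \<mu> J" for \<mu> I J
    unfolding resp_def using f0data_const by simp
  show "vanishes n N (low_mode (s - 1)) (fmult (dI i (resp k (f0data n u))) (dphi i ch))"
    by (intro vanishes_fmult_left) (simp add: vanishes_def dI_const[OF R0])
  show "vanishes n N (low_mode (s - 1)) (fmult (dphi i (resp k (f0data n u))) (dI i ch))"
  proof (cases "i \<le> s")
    case True
    with i show ?thesis
      by (intro vanishes_fmult_right) (simp add: vanishes_def dI_action_indep[OF fN ch_indep])
  next
    case False
    show ?thesis
    proof (rule vanishes_fmult_low)
      have "vanishes n N (low_mode (s - 1)) (dphi i (f0data n u))"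
        using dphi_f0data_vanishes_low[OF u] by (rule vanishes_low_mode_mono) (use False in auto)
      then show "vanishes n N (low_mode (s - 1)) (dphi i (resp k (f0data n u)))"
        unfolding dphi_def resp_def vanishes_def by auto
      show "vanishes n N (low_mode (s - 1)) (dI i ch)"
        using vanishes_low_mode_mono[OF ch_low, of "s - 1"] by (intro vanishes_dI fN) auto
    qed
  qed
qed

lemma vanishes_adpow_bracket_arg:
  assumes u: "finite_potentials n u" and props: "fseq_props_upto n k u N m" and "1 \<le> l"
  shows "vanishes n N (low_mode (k - m - 3)) (adpow n (Qop n k (fseq n k u m)) l (bracket_arg n k u m l))"
proof -
  define ch where "ch = Qop n k (fseq n k u m)"
  define G where "G = bracket_arg n k u m l"
  define R0 where "R0 = resp k (f0data n u)"
  define t where "t = k - m - 3"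
  have fN: "finite N" using props unfolding fseq_props_upto_def nonres_modes_def by auto
  have props_m: "fseq_props n k u N m" using props unfolding fseq_props_upto_def by auto
  have ch_low: "vanishes n N (low_mode (k - m - 2)) ch"
    unfolding ch_def by (rule fseq_props_Qop(2)[OF props_m])
  then have ch_low': "vanishes n N (low_mode t) ch"
    by (rule vanishes_low_mode_mono) (simp add: t_def)
  have R0: "fourier_decay n N 0 R0" unfolding R0_def by (intro fourier_decay_resp fourier_decay_f0data u)
  have G': "fourier_decay n N 0 (fsub G R0)"
    unfolding G_def by (intro fourier_decay_fsub fourier_decay_bracket_arg props R0)
  have "vanishes n N (low_mode (k - m - 2)) (fsub G R0)"
    unfolding vanishes_def fsub_def G_def R0_def using bracket_arg_low_mode[OF props] by simp
  then have "vanishes n N (low_mode t) (fsub G R0)"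
    by (rule vanishes_low_mode_mono) (simp add: t_def)
  then have rest: "vanishes n N (low_mode t) (pbracket n (fsub G R0) ch)"
    by (rule vanishes_pbracket_low[OF fN _ ch_low'])
  have "vanishes n N (low_mode (k - m - 2 - 1)) (pbracket n R0 ch)"
    unfolding R0_def ch_def
    by (rule vanishes_pbracket_resonant_f0data[OF fN u ch_low[unfolded ch_def] fseq_props_Qop(3)[OF props_m]])
  then have res: "vanishes n N (low_mode t) (pbracket n R0 ch)"
    by (simp add: t_def numeral_3_eq_3)
  have "agree n N (pbracket n G ch) (fadd (pbracket n R0 ch) (pbracket n (fsub G R0) ch))"
  proof -
    have "fadd R0 (fsub G R0) = G" unfolding fadd_def fsub_def by (simp add: fun_eq_iff)
    with pbracket_fadd_left[OF fN R0 G', of ch] show ?thesis by simp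
  qed
  from vanishes_agree[OF agree_sym[OF this] vanishes_fadd[OF res rest]]
  have "vanishes n N (low_mode t) (pbracket n G ch)" .
  then have "vanishes n N (low_mode t) (adpow n ch (Suc s) G)" for s
    by (induction s) (simp_all add: vanishes_pbracket_low[OF fN _ ch_low'])
  moreover obtain s where "l = Suc s" using \<open>1 \<le> l\<close> by (cases l) auto
  ultimately show ?thesis unfolding G_def ch_def t_def by simp
qed

lemma fseq_props_upto_Suc:
  assumes u: "finite_potentials n u" and props: "fseq_props_upto n k u N m"
  shows "\<exists>N'. fseq_props_upto n k u N' (Suc m)"
proof -
  have N: "nonres_modes k N" and fN: "finite N" and props_m: "fseq_props n k u N m"
    using props unfolding fseq_props_upto_def nonres_modes_def by auto
  define ch where "ch = Qop n k (fseq n k u m)"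
  note ch = fseq_props_Qop[OF props_m, folded ch_def]
  define F where "F = fseq n k u (Suc m)"
  have F: "F = (\<lambda>\<mu> I. \<Sum>l=1..k-1. fscale (1 / of_nat (fact l)) (adpow n ch l (bracket_arg n k u m l)) \<mu> I)"
    unfolding F_def fseq_Suc_bracket_arg ch_def ..
  have decay: "fourier_decay n N (2 * Suc m) F"
    unfolding F
  proof (intro fourier_decay_sum fourier_decay_fscale)
    fix l :: nat assume "l \<in> {1..k-1}"
    then have "2 * Suc m \<le> 0 + l * Suc (Suc (2 * m))" by (cases l) auto
    with fourier_decay_adpow[OF fN fourier_decay_bracket_arg[OF props] ch(1)]
    show "fourier_decay n N (2 * Suc m) (adpow n ch l (bracket_arg n k u m l))"
      by (rule fourier_decay_weaken)
  qed simp
  have low: "vanishes n N (low_mode (k - Suc m - 2)) F"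
    unfolding F ch_def using vanishes_adpow_bracket_arg[OF u props]
    by (intro vanishes_sum vanishes_fscale) (auto simp: numeral_3_eq_3)
  have indep: "action_indep n N i F" if "1 \<le> i" "i \<le> k - Suc m - 1" for i
    unfolding F using that
    by (intro action_indep_sum action_indep_fscale action_indep_adpow fN action_indep_bracket_arg[OF props]
        ch(3)) auto
  define N' where "N' = N \<union> {\<mu>\<in>fsupp F. \<mu> k \<noteq> 0}"
  have NN': "N \<subseteq> N'" unfolding N'_def by auto
  have "nonres_modes k N'"
    using N fourier_decay_finite[OF decay] unfolding N'_def nonres_modes_def by auto
  moreover have "fseq_props n k u N' (Suc m)"
    unfolding fseq_props_def F_def[symmetric]
    using fourier_decay_mono[OF decay NN'] vanishes_mono_modes[OF low NN']
      action_indep_mono_modes[OF indep NN']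
    by (auto simp: N'_def elim: vanishes_mono)
  ultimately have "fseq_props_upto n k u N' (Suc m)"
    using props fseq_props_mono_modes[OF _ NN'] unfolding fseq_props_upto_def by (auto simp: le_Suc_eq)
  then show ?thesis by blast
qed

lemma fseq_props_upto_exists: "finite_potentials n u \<Longrightarrow> \<exists>N. fseq_props_upto n k u N m"
proof (induction m)
  case 0
  then show ?case using fseq_props_upto_0 by blast
next
  case (Suc m)
  then show ?case using fseq_props_upto_Suc by blast
qed

section \<open>The leading term of \<open>\<partial>\<^sub>\<phi>\<^sub>a f\<^sup>(\<^sup>j\<^sup>)\<close>\<close>

lemma bigO_fin_feval:
  assumes N: "nonres_modes k N" and k: "k \<in> {1..n}" and R: "fourier_decay n N d R"
    and F: "\<And>I \<phi>. I \<in> regular n N \<Longrightarrow> F I \<phi> = feval n R I \<phi>"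
  shows "bigO_fin n k F (- real d)"
proof -
  obtain H where H: "\<And>\<mu>. rat_decay n N d (H \<mu>)" "\<And>\<mu> I. I \<in> regular n N \<Longrightarrow> R \<mu> I = H \<mu> I"
    using fourier_decay_coeffs[OF R] by blast
  show ?thesis
  proof (rule bigO_fin_fourier_sum[OF N k fourier_decay_finite[OF R]])
    show "\<forall>\<mu>\<in>fsupp R. rat_decay n N d (H \<mu>)" using H(1) by blast
    show "F I \<phi> = (\<Sum>\<mu>\<in>fsupp R. H \<mu> I * exp (\<i> * mu_dot_phi n \<mu> \<phi>))" if "I \<in> regular n N" for I \<phi>
      using F[OF that] H(2)[OF that] unfolding feval_def by simp
  qed
qed

lemma dphi_bracket_arg:
  assumes u: "finite_potentials n u" and props: "fseq_props_upto n k u N m"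
    and a: "1 \<le> a" "a + m + 2 = k"
  shows "agree n N (dphi a (bracket_arg n k u m l)) (dphi a (f0data n u))"
  unfolding agree_def dphi_def
proof (intro allI ballI)
  fix \<mu> I assume I: "I \<in> regular n N"
  have "bracket_arg n k u m l \<mu> I = f0data n u \<mu> I" if "\<mu> a \<noteq> 0"
  proof -
    have "low_mode (k - m - 2) \<mu>" using a that unfolding low_mode_def by auto
    then have "bracket_arg n k u m l \<mu> I = resp k (f0data n u) \<mu> I"
      by (rule bracket_arg_low_mode[OF props _ I])
    moreover have "\<mu> k = 0" if "f0data n u \<mu> I \<noteq> 0"
      using f0data_mode_far[OF u that \<open>\<mu> a \<noteq> 0\<close>] a by simp
    ultimately show ?thesis unfolding resp_def by auto
  qed
  then show "\<i> * of_int (\<mu> a) * bracket_arg n k u m l \<mu> I = \<i> * of_int (\<mu> a) * f0data n u \<mu> I"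
    by (cases "\<mu> a = 0") auto
qed

lemma dphi_fseq_Suc:
  assumes u: "finite_potentials n u" and props: "fseq_props_upto n k u N m"
    and a: "1 \<le> a" "a + m + 2 = k"
  defines "ch \<equiv> Qop n k (fseq n k u m)"
  shows "agree n N (dphi a (fseq n k u (Suc m)))
    (\<lambda>\<mu> I. \<Sum>l=1..k-1. fscale (1 / of_nat (fact l)) (adpow n ch l (dphi a (f0data n u))) \<mu> I)"
  unfolding agree_def
proof (intro allI ballI)
  fix \<mu> I assume I: "I \<in> regular n N"
  have fN: "finite N" using props unfolding fseq_props_upto_def nonres_modes_def by auto
  have props_m: "fseq_props n k u N m" using props unfolding fseq_props_upto_def by auto
  have ch: "fourier_decay n N (Suc (2 * m)) ch"
    unfolding ch_def by (rule fseq_props_Qop(1)[OF props_m])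
  have "vanishes n N (low_mode (k - m - 2)) ch"
    unfolding ch_def by (rule fseq_props_Qop(2)[OF props_m])
  then have ch_a: "vanishes n N (\<lambda>\<mu>. \<mu> a \<noteq> 0) ch"
    by (rule vanishes_mono) (use a in \<open>auto simp: low_mode_def\<close>)
  have G: "fourier_decay n N 0 (bracket_arg n k u m l)" for l
    by (rule fourier_decay_bracket_arg[OF props])
  have "agree n N (dphi a (adpow n ch l (bracket_arg n k u m l))) (adpow n ch l (dphi a (f0data n u)))"
    for l
  proof (rule agree_trans)
    show "agree n N (dphi a (adpow n ch l (bracket_arg n k u m l))) (adpow n ch l (dphi a (bracket_arg n k u m l)))"
      by (rule dphi_adpow[OF fN G ch ch_a])
    show "agree n N (adpow n ch l (dphi a (bracket_arg n k u m l))) (adpow n ch l (dphi a (f0data n u)))"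
      by (rule agree_adpow[OF fN fourier_decay_dphi[OF G] fourier_decay_dphi[OF fourier_decay_f0data[OF u]]
          ch dphi_bracket_arg[OF u props a]])
  qed
  then have "fscale (1 / of_nat (fact l)) (dphi a (adpow n ch l (bracket_arg n k u m l))) \<mu> I =
      fscale (1 / of_nat (fact l)) (adpow n ch l (dphi a (f0data n u))) \<mu> I" for l
    unfolding fscale_def using agreeD[OF _ I] by metis
  moreover have "dphi a (fseq n k u (Suc m)) \<mu> I =
      (\<Sum>l=1..k-1. fscale (1 / of_nat (fact l)) (dphi a (adpow n ch l (bracket_arg n k u m l))) \<mu> I)"
    unfolding fseq_Suc_bracket_arg ch_def dphi_def fscale_def by (simp add: sum_distrib_left ac_simps)
  ultimately show "dphi a (fseq n k u (Suc m)) \<mu> I =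
      (\<Sum>l=1..k-1. fscale (1 / of_nat (fact l)) (adpow n ch l (dphi a (f0data n u))) \<mu> I)"
    by simp
qed

text \<open>In the first-order bracket only the \<open>I\<^sub>a\<^sub>+\<^sub>1\<close>-derivative of \<open>\<chi>\<close> survives: \<open>\<chi>\<close> does not depend
  on \<open>I\<^sub>1, \<dots>, I\<^sub>a\<close>, and \<open>\<partial>\<^sub>\<phi>\<^sub>a f\<^sup>(\<^sup>0\<^sup>)\<close> has no modes in \<open>\<phi>\<^sub>a\<^sub>+\<^sub>2, \<phi>\<^sub>a\<^sub>+\<^sub>3, \<dots>\<close>.\<close>
lemma pbracket_dphi_f0data:
  assumes fN: "finite N" and u: "finite_potentials n u" and a: "a + 1 \<le> n"
    and indep: "\<And>i. 1 \<le> i \<Longrightarrow> i \<le> a \<Longrightarrow> action_indep n N i ch" and I: "I \<in> regular n N"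
  shows "pbracket n (dphi a (f0data n u)) ch \<mu> I =
    fmult (dphi (a + 1) (dphi a (f0data n u))) (dI (a + 1) ch) \<mu> I"
proof -
  define h where "h = dphi a (f0data n u)"
  define g where "g i = fsub (fmult (dphi i h) (dI i ch)) (fmult (dI i h) (dphi i ch)) \<mu> I" for i
  have "h \<mu> I = h \<mu> J" for \<mu> I J unfolding h_def dphi_def using f0data_const by simp
  then have second: "fmult (dI i h) (dphi i ch) \<mu> I = 0" for i
    unfolding fmult_def by (simp add: dI_const)
  have "g i = 0" if i: "i \<in> {1..n} - {a + 1}" for i
  proof (cases "i \<le> a")
    case True
    then have "dI i ch \<nu> I = 0" for \<nu> using dI_action_indep[OF fN indep I] i by auto
    then show ?thesis unfolding g_def fsub_def second by (simp add: fmult_def)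
  next
    case False
    have "dphi i h \<nu> I = 0" for \<nu>
      using f0data_mode_far[OF u, of \<nu> I a i] False i unfolding h_def dphi_def by auto
    then show ?thesis unfolding g_def fsub_def second by (simp add: fmult_def)
  qed
  then have "(\<Sum>i=1..n. g i) = (\<Sum>i\<in>{a + 1}. g i)"
    using a by (intro sum.mono_neutral_right) auto
  then show ?thesis unfolding pbracket_def g_def[symmetric] h_def[symmetric] g_def fsub_def second by simp
qed

lemma dphi_fseq_Suc_first_order:
  assumes u: "finite_potentials n u" and props: "fseq_props_upto n k u N m"
    and a: "1 \<le> a" "a + m + 2 = k" and k: "k \<le> n"
  obtains R where "fourier_decay n N (2 * Suc m + 1) R"
    "agree n N (dphi a (fseq n k u (Suc m)))
       (fadd (fmult (dphi (a + 1) (dphi a (f0data n u))) (dI (a + 1) (Qop n k (fseq n k u m)))) R)"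
proof -
  have fN: "finite N" using props unfolding fseq_props_upto_def nonres_modes_def by auto
  have props_m: "fseq_props n k u N m" using props unfolding fseq_props_upto_def by auto
  define ch where "ch = Qop n k (fseq n k u m)"
  define h where "h = dphi a (f0data n u)"
  define R where "R = (\<lambda>\<mu> I. \<Sum>l\<in>{2..k-1}. fscale (1 / of_nat (fact l)) (adpow n ch l h) \<mu> I)"
  have ch: "fourier_decay n N (Suc (2 * m)) ch"
    and ch_indep: "\<And>i. 1 \<le> i \<Longrightarrow> i \<le> a \<Longrightarrow> action_indep n N i ch"
    unfolding ch_def using fseq_props_Qop[OF props_m] a by auto
  have "fourier_decay n N (2 * Suc m + 1) R"
    unfolding R_def
  proof (intro fourier_decay_sum fourier_decay_fscale)
    fix l assume "l \<in> {2..k-1}"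
    then have "2 * Suc m + 1 \<le> 0 + l * Suc (Suc (2 * m))"
      using mult_right_mono[of 2 l "Suc (Suc (2 * m))"] by simp
    with fourier_decay_adpow[OF fN fourier_decay_dphi[OF fourier_decay_f0data[OF u]] ch]
    show "fourier_decay n N (2 * Suc m + 1) (adpow n ch l h)"
      unfolding h_def by (rule fourier_decay_weaken)
  qed simp
  moreover have "agree n N (dphi a (fseq n k u (Suc m)))
      (fadd (fmult (dphi (a + 1) h) (dI (a + 1) ch)) R)"
  proof -
    have "{1..k-1} = insert 1 {2..k-1}" using a by auto
    then have "(\<Sum>l=1..k-1. fscale (1 / of_nat (fact l)) (adpow n ch l h) \<mu> I)
        = pbracket n h ch \<mu> I + R \<mu> I" for \<mu> I
      unfolding R_def by (simp add: fscale_def)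
    moreover have "pbracket n h ch \<mu> I = fmult (dphi (a + 1) h) (dI (a + 1) ch) \<mu> I"
      if "I \<in> regular n N" for \<mu> I
      unfolding h_def using a k by (intro pbracket_dphi_f0data[OF fN u _ ch_indep that]) auto
    ultimately show ?thesis
      using dphi_fseq_Suc[OF u props a] unfolding agree_def fadd_def h_def ch_def by simp
  qed
  ultimately show ?thesis using that unfolding h_def ch_def by blast
qed

lemma dphi_fseq_leading_term:
  assumes u: "finite_potentials n u" and props: "fseq_props_upto n k u N j"
    and j: "1 \<le> j" and a: "1 \<le> a" "a + j + 1 = k" and k: "k \<le> n"
  obtains R where "fourier_decay n N (2 * j + 1) R"
    "\<And>I \<phi>. I \<in> regular n N \<Longrightarrow> feval n (dphi a (fseq n k u j)) I \<phi>
       - Upot'' u a (\<phi> (a + 1) - \<phi> a) * feval n (Qop n k (Qop n k (dphi (a + 1) (fseq n k u (j - 1))))) I \<phi>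
       = feval n R I \<phi>"
proof -
  obtain m where m: "j = Suc m" using j by (cases j) auto
  have fN: "finite N" using props unfolding fseq_props_upto_def nonres_modes_def by auto
  have props_m: "fseq_props_upto n k u N m" and props_m': "fseq_props n k u N m"
    and props_j: "fseq_props n k u N j"
    using props unfolding fseq_props_upto_def m by auto
  define P where "P = dphi (a + 1) (dphi a (f0data n u))"
  define X where "X = dI (a + 1) (Qop n k (fseq n k u m))"
  define QQ where "QQ = Qop n k (Qop n k (dphi (a + 1) (fseq n k u m)))"
  obtain R where R: "fourier_decay n N (2 * Suc m + 1) R"
    and split: "agree n N (dphi a (fseq n k u j)) (fadd (fmult P X) R)"
    using dphi_fseq_Suc_first_order[OF u props_m a(1) _ k] a m unfolding P_def X_def by auto
  have fin: "finite (fsupp (dphi a (fseq n k u j)))" "finite (fsupp P)" "finite (fsupp X)"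
    "finite (fsupp QQ)" "finite (fsupp R)"
    using fourier_decay_finite[OF R] finite_fsupp_f0data[OF u]
      fourier_decay_finite[OF fseq_props_Qop(1)[OF props_m']]
      props_j props_m' unfolding P_def X_def QQ_def fseq_props_def
    by (auto intro: finite_fsupp_dphi finite_fsupp_dI finite_fsupp_Qop fourier_decay_finite)
  have X: "agree n N X (fscale (-1) QQ)"
    using props_m' a k m dI_Qop[OF fN] unfolding X_def QQ_def fseq_props_def agree_def fscale_def
    by auto
  show ?thesis
  proof (rule that)
    show "fourier_decay n N (2 * j + 1) R" using R m by simp
    fix I \<phi> assume I: "I \<in> regular n N"
    have "feval n (dphi a (fseq n k u j)) I \<phi> = feval n P I \<phi> * feval n X I \<phi> + feval n R I \<phi>"
      using feval_agree[OF fin(1) _ split I] fin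
      by (simp add: feval_fadd feval_fmult finite_fsupp_fmult finite_fsupp_fadd)
    also have "feval n X I \<phi> = - feval n QQ I \<phi>"
      using feval_agree[OF fin(3) finite_fsupp_fscale[OF fin(4)] X I] by (simp add: feval_fscale fin)
    also have "feval n P I \<phi> = - Upot'' u a (\<phi> (a + 1) - \<phi> a)"
      unfolding P_def using a k by (intro feval_dphi_dphi_f0data u) auto
    finally show "feval n (dphi a (fseq n k u j)) I \<phi>
       - Upot'' u a (\<phi> (a + 1) - \<phi> a) * feval n (Qop n k (Qop n k (dphi (a + 1) (fseq n k u (j - 1))))) I \<phi>
       = feval n R I \<phi>"
      unfolding QQ_def m by simp
  qed
qed

theorem lemma7p4:
  fixes n k :: nat and u :: "nat \<Rightarrow> int \<Rightarrow> complex"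
  assumes "n \<ge> 2" and "2 \<le> k" and "k \<le> n"
    and "\<forall>i\<in>{1..n-1}. finite {m. u i m \<noteq> 0}"
    and "\<forall>i\<in>{1..n-1}. u i 0 = 0"
    and "\<forall>i\<in>{1..n-1}. \<forall>m. u i (- m) = cnj (u i m)"
    and "\<forall>i\<in>{1..n-1}. \<forall>x::real. \<not> (Upot' u i (of_real x) = 0 \<and> Upot'' u i (of_real x) = 0)"
  shows "\<forall>j. 1 \<le> j \<and> j \<le> k - 2 \<longrightarrow>
    bigO_fin n k
      (\<lambda>I \<phi>. feval n (dphi (k - j - 1) (fseq n k u j)) I \<phi>
         - Upot'' u (k - j - 1) (\<phi> (k - j) - \<phi> (k - j - 1))
           * feval n (Qop n k (Qop n k (dphi (k - j) (fseq n k u (j - 1))))) I \<phi>)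
      (- (2 * real j + 1))"
proof (intro allI impI)
  fix j assume j: "1 \<le> j \<and> j \<le> k - 2"
  have u: "finite_potentials n u" using assms(4,5) unfolding finite_potentials_def by auto
  obtain N where props: "fseq_props_upto n k u N j" using fseq_props_upto_exists[OF u] by blast
  then have N: "nonres_modes k N" unfolding fseq_props_upto_def by blast
  have a: "1 \<le> k - j - 1" "k - j - 1 + j + 1 = k" and a1: "k - j = k - j - 1 + 1" using j by auto
  obtain R where R: "fourier_decay n N (2 * j + 1) R"
    and eq: "\<And>I \<phi>. I \<in> regular n N \<Longrightarrow> feval n (dphi (k - j - 1) (fseq n k u j)) I \<phi>
       - Upot'' u (k - j - 1) (\<phi> (k - j) - \<phi> (k - j - 1))
         * feval n (Qop n k (Qop n k (dphi (k - j) (fseq n k u (j - 1))))) I \<phi> = feval n R I \<phi>"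
      (is "\<And>I \<phi>. _ \<Longrightarrow> ?F I \<phi> = _")
    using dphi_fseq_leading_term[OF u props _ a assms(3)] j unfolding a1[symmetric] by blast
  have "bigO_fin n k ?F (- real (2 * j + 1))"
    using assms(2,3) by (intro bigO_fin_feval[OF N _ R eq]) auto
  moreover have "- real (2 * j + 1) = - (2 * real j + 1)" by simp
  ultimately show "bigO_fin n k ?F (- (2 * real j + 1))" by (simp only:)
qed

end
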